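(* (i) For every $t>0$, $$\lim_{\epsilon\to0}\int_0^t\!\int_{\mathbb R}\big[R_\epsilon(s,x)-G(s,x)\big]^2\,dx\,ds=0.$$ (ii) There is a finite constant $C_{a,\delta}\ge0$ such that for all $\epsilon>0$ and $t>0$, $$\int_{\mathbb R}R_\epsilon(t,x)^2\,dx\le C_{a,\delta}\,t^{-1/a}.$$
   Context: Fix $a\in(1,2]$ and $\delta\in\mathbb R$ with $|\delta|\le 2-a$. Let $G(t,x):=\frac{1}{2\pi}\int_{\mathbb R}\exp\{i\xi x - t|\xi|^a e^{-i\delta\pi\,\mathrm{sgn}(\xi)/2}\}\,d\xi$ for $t>0$, $x\in\mathbb R$ (the density of a strictly $a$-stable law). For $\epsilon>0$, $t>0$, $x\in\mathbb R$ define $$R_\epsilon(t,x):=e^{-t/\epsilon}\sum_{n=1}^\infty\frac{(t/\epsilon)^n}{n!}\,G(n\epsilon,x).$$ *)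

theory Defs
  imports "HOL-Analysis.Analysis"
begin

text \<open>Density of the strictly a-stable law, via its Fourier inversion integral
  (a Lebesgue/Bochner integral of a complex-valued integrable function); the
  integral is real-valued, we take its real part to obtain a real function.\<close>
definition stableG :: "real \<Rightarrow> real \<Rightarrow> real \<Rightarrow> real \<Rightarrow> real" where
  "stableG a \<delta> t x = Re ((1 / (2 * pi)) *
     integral\<^sup>L lborel (\<lambda>\<xi>::real. exp (\<i> * complex_of_real (\<xi> * x)
        - complex_of_real (t * \<bar>\<xi>\<bar> powr a)
          * exp (- \<i> * complex_of_real (\<delta> * pi * sgn \<xi> / 2)))))"

definition stableR :: "real \<Rightarrow> real \<Rightarrow> real \<Rightarrow> real \<Rightarrow> real \<Rightarrow> real" where
  "stableR a \<delta> \<epsilon> t x = exp (- t / \<epsilon>) *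
     (\<Sum>n. (t / \<epsilon>) ^ Suc n / fact (Suc n) * stableG a \<delta> (real (Suc n) * \<epsilon>) x)"

end

theory Submission
  imports Defs "HOL-Probability.Sinc_Integral" "HOL-Real_Asymp.Real_Asymp"
begin

text \<open>
  With \<open>l = t / \<epsilon>\<close> and the Poisson weights \<open>p n = exp (- l) * l ^ n / n!\<close>, \<open>R\<^sub>\<epsilon>(t, x)\<close> is the
  Poisson average \<open>\<Sum>n\<ge>1. p n * G(n \<epsilon>, x)\<close>. Three estimates for the stable density drive the
  proof: \<open>\<bar>G(u, x)\<bar> \<le> K1 * u powr (- 1 / a)\<close>, \<open>\<bar>x * G(u, x)\<bar> \<le> K2\<close> (integration by parts in the
  Fourier integral, separately on each half line) and
  \<open>\<bar>G(u, x) - G(s, x)\<bar> \<le> K3 * \<bar>u - s\<bar> * min u s powr (- (a + 1) / a)\<close>.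

  A function \<open>g\<close> with \<open>\<bar>g\<bar> \<le> A\<close> and \<open>\<bar>x * g\<bar> \<le> B\<close> has \<open>\<integral> g\<^sup>2 \<le> 2 pi A B\<close>. Together with Jensen's
  inequality for the Poisson weights this reduces (ii) to the negative moment bound
  \<open>\<Sum>n\<ge>1. p n * n powr (- 1 / a) \<le> 6 * l powr (- 1 / a)\<close>. For (i), the same argument applied to
  \<open>R\<^sub>\<epsilon>(s, x) - G(s, x) = \<Sum>n. p n * (G(n \<epsilon>, x) - G(s, x))\<close> gives the bound \<open>C * s powr (- 1 / a)\<close>,
  integrable near \<open>s = 0\<close>; for \<open>s \<ge> \<eta>\<close> the time-Lipschitz estimate, averaged against the
  Poisson variance \<open>l\<close>, gives \<open>O(sqrt \<epsilon> + \<epsilon> powr (1 - 1 / a))\<close> uniformly in \<open>s\<close>.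
\<close>

lemma exp_ge_quartic:
  fixes z :: real
  assumes "0 \<le> z"
  shows "z ^ 4 / 64 \<le> exp z"
proof -
  have "1 + z/2 + (z/2)\<^sup>2/2 \<le> exp (z/2)"
    using assms exp_lower_Taylor_quadratic[of "z/2"] by simp
  hence "z\<^sup>2 / 8 \<le> exp (z/2)"
    using assms by (simp add: power2_eq_square)
  hence "(z\<^sup>2 / 8)\<^sup>2 \<le> (exp (z/2))\<^sup>2"
    using assms by (intro power_mono) auto
  also have "(exp (z/2))\<^sup>2 = exp z"
    by (simp add: power2_eq_square flip: exp_add)
  finally show ?thesis
    by (simp add: power_def field_simps)
qed

lemma abs_mult_sub_le_quadratic:
  fixes y \<epsilon> s :: real
  assumes "0 < \<epsilon>"
  shows "\<bar>y * \<epsilon> - s\<bar> \<le> sqrt \<epsilon> / 2 + \<epsilon> * sqrt \<epsilon> / 2 * (y - s / \<epsilon>)\<^sup>2"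
proof -
  define h where "h = sqrt \<epsilon>"
  have h: "0 < h" "h * h = \<epsilon>"
    using assms by (simp_all add: h_def)
  have "y * \<epsilon> - s = h * h * (y - s / \<epsilon>)"
    using assms h(2) by (simp add: field_simps)
  hence "\<bar>y * \<epsilon> - s\<bar> = h * (h * \<bar>y - s / \<epsilon>\<bar>)"
    using h(1) by (simp add: abs_mult)
  also have "\<dots> \<le> h * ((1 + h\<^sup>2 * (y - s / \<epsilon>)\<^sup>2) / 2)"
  proof -
    have "0 \<le> (1 - h * \<bar>y - s / \<epsilon>\<bar>)\<^sup>2"
      by simp
    hence "h * \<bar>y - s / \<epsilon>\<bar> \<le> (1 + h\<^sup>2 * (y - s / \<epsilon>)\<^sup>2) / 2"
      by (simp add: power2_eq_square algebra_simps)
    thus ?thesis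
      using h(1) by (intro mult_left_mono) auto
  qed
  also have "\<dots> = sqrt \<epsilon> / 2 + \<epsilon> * sqrt \<epsilon> / 2 * (y - s / \<epsilon>)\<^sup>2"
    using h by (simp add: h_def power2_eq_square field_simps)
  finally show ?thesis .
qed

lemma norm_exp_minus_one_le:
  fixes w :: complex
  assumes "Re w \<le> 0"
  shows "norm (exp w - 1) \<le> 2 * norm w"
proof -
  define e where "e = exp (\<i> * complex_of_real (Im w))"
  have exp_w: "exp w = complex_of_real (exp (Re w)) * e"
    unfolding e_def by (subst complex_eq[of w]) (simp add: exp_add exp_of_real)
  have "norm (exp w - 1) \<le> norm (exp w - e) + norm (e - 1)"
    using norm_triangle_ineq[of "exp w - e" "e - 1"] by simp
  also have "exp w - e = complex_of_real (exp (Re w) - 1) * e"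
    by (simp add: exp_w algebra_simps)
  hence "norm (exp w - e) = \<bar>exp (Re w) - 1\<bar>"
    by (simp only: norm_mult norm_of_real) (simp add: e_def)
  also have "\<bar>exp (Re w) - 1\<bar> \<le> \<bar>Re w\<bar>"
  proof -
    have "exp (Re w) \<le> 1"
      using assms by simp
    thus ?thesis
      using assms exp_ge_add_one_self[of "Re w"] by linarith
  qed
  also have "norm (e - 1) = 2 * \<bar>sin (Im w / 2)\<bar>"
    unfolding e_def by (rule dist_exp_i_1)
  also have "\<dots> \<le> \<bar>Im w\<bar>"
    using abs_sin_x_le_abs_x[of "Im w / 2"] by simp
  also have "\<bar>Re w\<bar> + \<bar>Im w\<bar> \<le> 2 * norm w"
    using abs_Re_le_cmod[of w] abs_Im_le_cmod[of w] by simp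
  finally show ?thesis
    by simp
qed

lemma norm_exp_mult_diff_le:
  fixes Z :: complex
  assumes "0 \<le> Re Z" "u \<le> s"
  shows "norm (exp (- of_real u * Z) - exp (- of_real s * Z)) \<le> 2 * (s - u) * norm Z * exp (- u * Re Z)"
proof -
  have "exp (- of_real u * Z) - exp (- of_real s * Z) = - (exp (- of_real u * Z) * (exp (- of_real (s - u) * Z) - 1))"
    by (simp add: algebra_simps flip: exp_add)
  hence "norm (exp (- of_real u * Z) - exp (- of_real s * Z)) = exp (- u * Re Z) * norm (exp (- of_real (s - u) * Z) - 1)"
    by (simp only: norm_minus_cancel norm_mult) simp
  also have "norm (exp (- of_real (s - u) * Z) - 1) \<le> 2 * norm (- of_real (s - u) * Z)"
    using assms by (intro norm_exp_minus_one_le) (simp add: mult_nonpos_nonneg)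
  also have "norm (- of_real (s - u) * Z) = (s - u) * norm Z"
    using assms(2) by (simp only: norm_mult norm_minus_cancel norm_of_real)
  finally show ?thesis
    by (simp add: mult_ac)
qed

lemma norm_integral_le_nn_integral:
  fixes f :: "'a \<Rightarrow> 'b::{banach, second_countable_topology}"
  assumes "integrable M f" and "\<And>x. norm (f x) \<le> g x"
    and "(\<integral>\<^sup>+x. ennreal (g x) \<partial>M) = ennreal K" and "0 \<le> K"
  shows "norm (integral\<^sup>L M f) \<le> K"
proof -
  have "ennreal (norm (integral\<^sup>L M f)) \<le> (\<integral>\<^sup>+x. ennreal (norm (f x)) \<partial>M)"
    using assms(1) by (rule integral_norm_bound_ennreal)
  also have "\<dots> \<le> (\<integral>\<^sup>+x. ennreal (g x) \<partial>M)"
    using assms(2) by (intro nn_integral_mono ennreal_leI)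
  finally show ?thesis
    using assms(3,4) by simp
qed

lemma summable_mult_of_bounded:
  fixes w b :: "nat \<Rightarrow> real"
  assumes "\<And>n. 0 \<le> w n" "summable w" "\<And>n. \<bar>b n\<bar> \<le> M"
  shows "summable (\<lambda>n. w n * b n)"
  by (rule summable_comparison_test[OF _ summable_mult2[OF assms(2), of M]])
     (use assms in \<open>auto simp: abs_mult intro!: mult_left_mono\<close>)

lemma power2_suminf_le_suminf_power2:
  fixes w b :: "nat \<Rightarrow> real"
  assumes w: "\<And>n. 0 \<le> w n" "w sums W" "W \<le> 1" and b: "\<And>n. \<bar>b n\<bar> \<le> M"
  shows "(\<Sum>n. w n * b n)\<^sup>2 \<le> (\<Sum>n. w n * (b n)\<^sup>2)"
proof -
  have sw: "summable w"
    using w(2) by (rule sums_summable)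
  have s1: "summable (\<lambda>n. w n * b n)"
    using w(1) sw b by (rule summable_mult_of_bounded)
  have "\<bar>(b n)\<^sup>2\<bar> \<le> M\<^sup>2" for n
    using power_mono[OF b[of n] abs_ge_zero, of 2] by simp
  hence s2: "summable (\<lambda>n. w n * (b n)\<^sup>2)"
    using w(1) sw by (rule summable_mult_of_bounded[rotated 2])
  define S1 where "S1 = (\<Sum>n. w n * b n)"
  define S2 where "S2 = (\<Sum>n. w n * (b n)\<^sup>2)"
  have "(\<lambda>n. w n * (b n)\<^sup>2 - 2 * S1 * (w n * b n) + S1\<^sup>2 * w n) sums (S2 - 2 * S1 * S1 + S1\<^sup>2 * W)"
    unfolding S1_def S2_def by (intro sums_add sums_diff sums_mult w(2) summable_sums s1 s2)
  moreover have "(\<lambda>n. w n * (b n)\<^sup>2 - 2 * S1 * (w n * b n) + S1\<^sup>2 * w n) = (\<lambda>n. w n * (b n - S1)\<^sup>2)"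
    by (rule ext) (simp add: power2_eq_square algebra_simps)
  ultimately have centred: "(\<lambda>n. w n * (b n - S1)\<^sup>2) sums (S2 - 2 * S1 * S1 + S1\<^sup>2 * W)"
    by simp
  have "0 \<le> S2 - 2 * S1 * S1 + S1\<^sup>2 * W"
  proof (rule sums_le[OF _ sums_zero centred])
    show "0 \<le> w n * (b n - S1)\<^sup>2" for n
      using w(1) by simp
  qed
  moreover have "S1\<^sup>2 * W \<le> S1\<^sup>2"
    using w(3) by (simp add: mult_left_le)
  ultimately show ?thesis
    by (simp add: S1_def S2_def power2_eq_square)
qed

section \<open>Integrals on the real line\<close>

lemma nn_integral_inverse_1_plus_square:
  "(\<integral>\<^sup>+x. ennreal (inverse (1 + x\<^sup>2)) \<partial>lborel) = ennreal pi"
proof -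
  have int: "integrable lborel (\<lambda>x::real. inverse (1 + x\<^sup>2))"
    using integrable_inverse_1_plus_square by (simp add: set_integrable_def)
  have "(\<integral>\<^sup>+x. ennreal (inverse (1 + x\<^sup>2)) \<partial>lborel) = ennreal (integral\<^sup>L lborel (\<lambda>x::real. inverse (1 + x\<^sup>2)))"
    by (rule nn_integral_eq_integral[OF int]) (auto simp: add_nonneg_eq_0_iff)
  also have "integral\<^sup>L lborel (\<lambda>x::real. inverse (1 + x\<^sup>2)) = pi"
    using LBINT_inverse_1_plus_square
    by (simp add: interval_lebesgue_integral_def set_lebesgue_integral_def einterval_def)
  finally show ?thesis .
qed

lemma powr_mult_exp_le_inverse_1_plus_square:
  fixes \<eta> :: real
  assumes a: "1 \<le> a" and c: "0 < c" and p: "0 \<le> p" "p \<le> 2"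
  shows "\<bar>\<eta>\<bar> powr p * exp (- c * \<bar>\<eta>\<bar> powr a) \<le> (2 + 128 / c ^ 4) * inverse (1 + \<eta>\<^sup>2)"
proof (cases "\<bar>\<eta>\<bar> \<le> 1")
  case True
  have "\<bar>\<eta>\<bar> powr p \<le> 1"
  proof (cases "\<eta> = 0")
    case False
    hence "\<bar>\<eta>\<bar> powr p \<le> 1 powr p"
      using True p by (intro powr_mono2) auto
    thus ?thesis
      by simp
  qed simp
  moreover have "exp (- c * \<bar>\<eta>\<bar> powr a) \<le> 1"
    using c by simp
  ultimately have "\<bar>\<eta>\<bar> powr p * exp (- c * \<bar>\<eta>\<bar> powr a) \<le> 1"
    by (simp add: mult_le_one)
  also have "1 \<le> 2 * inverse (1 + \<eta>\<^sup>2)"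
    using True abs_square_le_1[of \<eta>] by (simp add: field_simps add_pos_nonneg)
  also have "\<dots> \<le> (2 + 128 / c ^ 4) * inverse (1 + \<eta>\<^sup>2)"
    using c by (intro mult_right_mono) auto
  finally show ?thesis .
next
  case False
  define y where "y = \<bar>\<eta>\<bar>"
  have y: "1 < y"
    using False by (simp add: y_def)
  have "y powr 1 \<le> y powr a"
    using y a by (intro powr_mono) auto
  hence "exp (- c * y powr a) \<le> exp (- c * y)"
    using y c by simp
  also have "exp (- c * y) \<le> 64 / (c * y) ^ 4"
    using exp_ge_quartic[of "c * y"] c y by (simp add: exp_minus field_simps)
  finally have "exp (- c * y powr a) \<le> 64 / (c * y) ^ 4" .
  moreover have "y powr p \<le> y\<^sup>2"
    using powr_mono[of p 2 y] y p by (simp add: powr_realpow)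
  ultimately have "y powr p * exp (- c * y powr a) \<le> y\<^sup>2 * (64 / (c * y) ^ 4)"
    by (intro mult_mono) auto
  also have "\<dots> = 128 / c ^ 4 * inverse (2 * y\<^sup>2)"
    using y c by (simp add: field_simps power_def)
  also have "\<dots> \<le> 128 / c ^ 4 * inverse (1 + y\<^sup>2)"
    using y c one_le_power[of y 2] by (intro mult_left_mono le_imp_inverse_le) (auto simp: add_pos_nonneg)
  also have "\<dots> \<le> (2 + 128 / c ^ 4) * inverse (1 + y\<^sup>2)"
    by (intro mult_right_mono) auto
  finally show ?thesis
    by (simp add: y_def)
qed

lemma nn_integral_powr_mult_exp_finite:
  assumes "1 \<le> a" "0 < c" "0 \<le> p" "p \<le> 2"
  shows "(\<integral>\<^sup>+\<eta>. ennreal (\<bar>\<eta>\<bar> powr p * exp (- c * \<bar>\<eta>\<bar> powr a)) \<partial>lborel) < \<infinity>"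
proof -
  have "(\<integral>\<^sup>+\<eta>. ennreal (\<bar>\<eta>\<bar> powr p * exp (- c * \<bar>\<eta>\<bar> powr a)) \<partial>lborel)
      \<le> (\<integral>\<^sup>+\<eta>. ennreal (2 + 128 / c ^ 4) * ennreal (inverse (1 + \<eta>\<^sup>2)) \<partial>lborel)"
  proof (intro nn_integral_mono)
    fix \<eta> :: real
    have "ennreal (2 + 128 / c ^ 4) * ennreal (inverse (1 + \<eta>\<^sup>2)) = ennreal ((2 + 128 / c ^ 4) * inverse (1 + \<eta>\<^sup>2))"
      using assms(2) by (intro ennreal_mult[symmetric]) (auto simp: add_nonneg_eq_0_iff)
    thus "ennreal (\<bar>\<eta>\<bar> powr p * exp (- c * \<bar>\<eta>\<bar> powr a)) \<le> ennreal (2 + 128 / c ^ 4) * ennreal (inverse (1 + \<eta>\<^sup>2))"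
      using powr_mult_exp_le_inverse_1_plus_square[OF assms] by (simp add: ennreal_leI)
  qed
  also have "\<dots> = ennreal (2 + 128 / c ^ 4) * ennreal pi"
    by (simp add: nn_integral_cmult nn_integral_inverse_1_plus_square)
  also have "\<dots> < \<infinity>"
    by (simp add: ennreal_mult_less_top)
  finally show ?thesis .
qed

lemma nn_integral_powr_mult_exp_scale:
  assumes a: "0 < a" and u: "0 < u"
  shows "(\<integral>\<^sup>+\<xi>. ennreal (\<bar>\<xi>\<bar> powr p * exp (- c * u * \<bar>\<xi>\<bar> powr a)) \<partial>lborel)
       = ennreal (u powr (- (p + 1) / a)) * (\<integral>\<^sup>+\<eta>. ennreal (\<bar>\<eta>\<bar> powr p * exp (- c * \<bar>\<eta>\<bar> powr a)) \<partial>lborel)"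
proof -
  define k where "k = u powr (- 1 / a)"
  have k: "0 < k"
    using u by (simp add: k_def)
  have "u * k powr a = 1"
    using u a by (simp add: k_def powr_powr flip: powr_add)
  hence "\<bar>0 + k * \<eta>\<bar> powr p * exp (- c * u * \<bar>0 + k * \<eta>\<bar> powr a)
      = k powr p * (\<bar>\<eta>\<bar> powr p * exp (- c * \<bar>\<eta>\<bar> powr a))" for \<eta>
    using k by (simp add: abs_mult powr_mult mult.assoc[symmetric])
  hence "(\<integral>\<^sup>+\<xi>. ennreal (\<bar>\<xi>\<bar> powr p * exp (- c * u * \<bar>\<xi>\<bar> powr a)) \<partial>lborel)
      = ennreal k * (\<integral>\<^sup>+\<eta>. ennreal (k powr p) * ennreal (\<bar>\<eta>\<bar> powr p * exp (- c * \<bar>\<eta>\<bar> powr a)) \<partial>lborel)"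
    using k by (subst nn_integral_real_affine[where c = k and t = 0]) (auto simp: ennreal_mult)
  also have "\<dots> = ennreal (k * k powr p) * (\<integral>\<^sup>+\<eta>. ennreal (\<bar>\<eta>\<bar> powr p * exp (- c * \<bar>\<eta>\<bar> powr a)) \<partial>lborel)"
    using k by (simp add: nn_integral_cmult ennreal_mult mult.assoc)
  also have "k * k powr p = u powr (- (p + 1) / a)"
    using u a k by (simp add: k_def powr_powr field_simps flip: powr_add)
  finally show ?thesis .
qed

lemma nn_integral_powr_Icc:
  assumes "0 \<le> \<eta>" "p < 1"
  shows "(\<integral>\<^sup>+s. ennreal (s powr (- p)) * indicator {0..\<eta>} s \<partial>lborel) = ennreal (\<eta> powr (1 - p) / (1 - p))"
proof -
  have "((\<lambda>x. x powr (- p)) has_integral (\<eta> powr (- p + 1) / (- p + 1))) {0..\<eta>}"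
    using assms by (intro has_integral_powr_from_0) auto
  hence "((\<lambda>x. if x \<in> {0..\<eta>} then x powr (- p) else 0) has_integral (\<eta> powr (1 - p) / (1 - p))) UNIV"
    by (subst has_integral_restrict_UNIV) (simp add: add.commute)
  hence "(\<integral>\<^sup>+s. ennreal (if s \<in> {0..\<eta>} then s powr (- p) else 0) \<partial>lborel) = ennreal (\<eta> powr (1 - p) / (1 - p))"
    by (rule nn_integral_has_integral_lborel[rotated 2]) auto
  moreover have "(\<lambda>s. ennreal (if s \<in> {0..\<eta>} then s powr (- p) else 0))
      = (\<lambda>s. ennreal (s powr (- p)) * indicator {0..\<eta>} s)"
    by (rule ext) (simp add: indicator_def)
  ultimately show ?thesis
    by simp
qed

lemma set_nn_integral_Icc_le:
  fixes F :: "real \<Rightarrow> ennreal"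
  assumes "0 \<le> C" "p < 1" "0 \<le> \<eta>" "0 \<le> t" "0 \<le> b"
    and near: "\<And>s. 0 < s \<Longrightarrow> s \<le> \<eta> \<Longrightarrow> s \<le> t \<Longrightarrow> F s \<le> ennreal (C * s powr (- p))"
    and away: "\<And>s. \<eta> \<le> s \<Longrightarrow> s \<le> t \<Longrightarrow> F s \<le> ennreal b"
  shows "(\<integral>\<^sup>+ s\<in>{0..t}. F s \<partial>lborel) \<le> ennreal (C * (\<eta> powr (1 - p) / (1 - p)) + b * t)"
proof -
  have "(\<integral>\<^sup>+ s\<in>{0..t}. F s \<partial>lborel)
      \<le> (\<integral>\<^sup>+ s. ennreal C * (ennreal (s powr (- p)) * indicator {0..\<eta>} s) + ennreal b * indicator {0..t} s \<partial>lborel)"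
  proof (rule nn_integral_mono_AE)
    show "AE s in lborel. F s * indicator {0..t} s
        \<le> ennreal C * (ennreal (s powr (- p)) * indicator {0..\<eta>} s) + ennreal b * indicator {0..t} s"
      using AE_lborel_singleton[of 0]
    proof eventually_elim
      case (elim s)
      show ?case
      proof (cases "s \<in> {0..t}")
        case s: True
        show ?thesis
        proof (cases "s \<le> \<eta>")
          case True
          hence "F s \<le> ennreal C * ennreal (s powr (- p))"
            using near s elim assms(1) by (simp add: ennreal_mult)
          thus ?thesis
            using True s by (simp add: indicator_def add_increasing2)
        next
          case False
          thus ?thesis
            using away s by (simp add: indicator_def add_increasing)
        qed
      qed simp
    qed
  qed
  also have "\<dots> = ennreal C * ennreal (\<eta> powr (1 - p) / (1 - p)) + ennreal b * ennreal t"
    using assms(2-4) by (subst nn_integral_add) (auto simp: nn_integral_cmult nn_integral_powr_Icc)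
  also have "\<dots> = ennreal (C * (\<eta> powr (1 - p) / (1 - p)) + b * t)"
    using assms(1-5) by (simp flip: ennreal_mult)
  finally show ?thesis .
qed

lemma tendsto_set_nn_integral_Icc_zero:
  fixes F :: "real \<Rightarrow> real \<Rightarrow> ennreal"
  assumes "0 \<le> C" "p < 1" "0 \<le> t"
    and near: "\<And>\<epsilon> s. 0 < \<epsilon> \<Longrightarrow> 0 < s \<Longrightarrow> s \<le> t \<Longrightarrow> F \<epsilon> s \<le> ennreal (C * s powr (- p))"
    and away: "\<And>\<eta>. 0 < \<eta> \<Longrightarrow> \<exists>\<beta>. (\<beta> \<longlongrightarrow> 0) (at_right 0) \<and>
                 (\<forall>\<^sub>F \<epsilon> in at_right 0. \<forall>s\<in>{\<eta>..t}. F \<epsilon> s \<le> ennreal (\<beta> \<epsilon>))"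
  shows "((\<lambda>\<epsilon>. \<integral>\<^sup>+ s\<in>{0..t}. F \<epsilon> s \<partial>lborel) \<longlongrightarrow> 0) (at_right 0)"
proof (rule tendsto_zero_ennreal)
  fix r :: real
  assume r: "0 < r"
  have "((\<lambda>\<eta>. C * (\<eta> powr (1 - p) / (1 - p))) \<longlongrightarrow> C * (0 / (1 - p))) (at_right 0)"
    using assms(2) by (intro tendsto_intros tendsto_zero_powrI) (auto simp: eventually_at_filter)
  hence "\<forall>\<^sub>F \<eta> in at_right 0. C * (\<eta> powr (1 - p) / (1 - p)) < r / 2"
    using r by (intro order_tendstoD) auto
  moreover have "\<forall>\<^sub>F \<eta> in at_right (0::real). 0 < \<eta>"
    by (simp add: eventually_at_filter)
  ultimately obtain \<eta> where \<eta>: "0 < \<eta>" "C * (\<eta> powr (1 - p) / (1 - p)) < r / 2"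
    by (metis (mono_tags, lifting) eventually_conj eventually_happens' trivial_limit_at_right_real)
  obtain \<beta> where \<beta>: "(\<beta> \<longlongrightarrow> 0) (at_right 0)"
    and F_away: "\<forall>\<^sub>F \<epsilon> in at_right 0. \<forall>s\<in>{\<eta>..t}. F \<epsilon> s \<le> ennreal (\<beta> \<epsilon>)"
    using away[OF \<eta>(1)] by blast
  have "((\<lambda>\<epsilon>. max 0 (\<beta> \<epsilon>) * t) \<longlongrightarrow> max 0 0 * t) (at_right 0)"
    by (intro tendsto_intros \<beta>)
  hence "\<forall>\<^sub>F \<epsilon> in at_right 0. max 0 (\<beta> \<epsilon>) * t < r / 2"
    using r by (intro order_tendstoD) auto
  moreover have "\<forall>\<^sub>F \<epsilon> in at_right (0::real). 0 < \<epsilon>"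
    by (simp add: eventually_at_filter)
  ultimately show "\<forall>\<^sub>F \<epsilon> in at_right 0. (\<integral>\<^sup>+ s\<in>{0..t}. F \<epsilon> s \<partial>lborel) < ennreal r"
    using F_away
  proof eventually_elim
    case (elim \<epsilon>)
    have "F \<epsilon> s \<le> ennreal (max 0 (\<beta> \<epsilon>))" if "\<eta> \<le> s" "s \<le> t" for s
    proof -
      have "F \<epsilon> s \<le> ennreal (\<beta> \<epsilon>)"
        using elim(3) that by auto
      also have "\<dots> \<le> ennreal (max 0 (\<beta> \<epsilon>))"
        by (intro ennreal_leI) simp
      finally show ?thesis .
    qed
    hence "(\<integral>\<^sup>+ s\<in>{0..t}. F \<epsilon> s \<partial>lborel) \<le> ennreal (C * (\<eta> powr (1 - p) / (1 - p)) + max 0 (\<beta> \<epsilon>) * t)"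
      using elim(2) \<eta>(1) by (intro set_nn_integral_Icc_le assms(1-3) near) auto
    also have "\<dots> < ennreal r"
      by (intro ennreal_lessI r) (use \<eta>(2) elim(1) in linarith)
    finally show ?case .
  qed
qed

text \<open>Dominating \<open>g\<^sup>2\<close> pointwise by this scaled Cauchy density bounds \<open>\<integral> g\<^sup>2\<close> without requiring
  \<open>g\<close> to be measurable.\<close>

definition cauchy_profile :: "real \<Rightarrow> real \<Rightarrow> real \<Rightarrow> real" where
  "cauchy_profile A B x = (A * B)\<^sup>2 / (B\<^sup>2 + (A * x)\<^sup>2)"

lemma cauchy_profile_measurable [measurable]: "cauchy_profile A B \<in> borel_measurable borel"
  unfolding cauchy_profile_def by measurable

lemma cauchy_profile_nonneg: "0 \<le> cauchy_profile A B x"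
  unfolding cauchy_profile_def by simp

lemma cauchy_profile_le: "cauchy_profile A B x \<le> A\<^sup>2"
proof (cases "B\<^sup>2 + (A * x)\<^sup>2 = 0")
  case False
  hence "0 < B\<^sup>2 + (A * x)\<^sup>2"
    by (simp add: add_pos_nonneg order_le_neq_trans)
  moreover have "(A * B)\<^sup>2 \<le> A\<^sup>2 * (B\<^sup>2 + (A * x)\<^sup>2)"
    by (simp add: algebra_simps)
  ultimately show ?thesis
    unfolding cauchy_profile_def by (simp add: divide_le_eq)
qed (simp add: cauchy_profile_def)

lemma power2_le_cauchy_profile:
  fixes g x :: real
  assumes "\<bar>g\<bar> \<le> A" "\<bar>x\<bar> * \<bar>g\<bar> \<le> B" "0 < B"
  shows "g\<^sup>2 \<le> 2 * cauchy_profile A B x"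
proof -
  have pos: "0 < B\<^sup>2 + (A * x)\<^sup>2"
    using assms(3) by (simp add: add_pos_nonneg)
  have "g\<^sup>2 \<le> A\<^sup>2"
    using power_mono[OF assms(1) abs_ge_zero, of 2] by simp
  moreover have "(x * g)\<^sup>2 \<le> B\<^sup>2"
    using power_mono[OF assms(2), of 2] by (simp add: abs_mult power_mult_distrib)
  ultimately have "g\<^sup>2 * (B\<^sup>2 + (A * x)\<^sup>2) \<le> 2 * (A * B)\<^sup>2"
    using mult_right_mono[of "g\<^sup>2" "A\<^sup>2" "B\<^sup>2"] mult_left_mono[of "(x * g)\<^sup>2" "B\<^sup>2" "A\<^sup>2"]
    by (simp add: algebra_simps)
  thus ?thesis
    using pos by (simp add: cauchy_profile_def field_simps)
qed

lemma nn_integral_cauchy_profile: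
  assumes "0 \<le> A" "0 < B"
  shows "(\<integral>\<^sup>+x. ennreal (cauchy_profile A B x) \<partial>lborel) = ennreal (pi * A * B)"
proof (cases "A = 0")
  case False
  hence A: "0 < A"
    using assms(1) by simp
  have "(\<integral>\<^sup>+x. ennreal (cauchy_profile A B x) \<partial>lborel)
      = ennreal (B / A) * (\<integral>\<^sup>+y. ennreal (cauchy_profile A B (0 + B / A * y)) \<partial>lborel)"
    using A assms(2) by (subst nn_integral_real_affine[where c = "B / A" and t = 0]) auto
  also have "(\<lambda>y. ennreal (cauchy_profile A B (0 + B / A * y))) = (\<lambda>y. ennreal (A\<^sup>2) * ennreal (inverse (1 + y\<^sup>2)))"
  proof
    fix y :: real
    have "B\<^sup>2 + (A * (B / A * y))\<^sup>2 = B\<^sup>2 * (1 + y\<^sup>2)"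
      using A by (simp add: power2_eq_square field_simps)
    hence "cauchy_profile A B (0 + B / A * y) = A\<^sup>2 * inverse (1 + y\<^sup>2)"
      using assms(2) by (simp add: cauchy_profile_def power_mult_distrib divide_inverse)
    thus "ennreal (cauchy_profile A B (0 + B / A * y)) = ennreal (A\<^sup>2) * ennreal (inverse (1 + y\<^sup>2))"
      by (simp add: ennreal_mult' ennreal_power)
  qed
  also have "(\<integral>\<^sup>+y. ennreal (A\<^sup>2) * ennreal (inverse (1 + y\<^sup>2)) \<partial>lborel) = ennreal (A\<^sup>2) * ennreal pi"
    by (simp add: nn_integral_cmult nn_integral_inverse_1_plus_square)
  also have "ennreal (B / A) * (ennreal (A\<^sup>2) * ennreal pi) = ennreal (pi * A * B)"
    using A assms(2) by (simp add: ennreal_power power2_eq_square field_simps flip: ennreal_mult)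
  finally show ?thesis .
qed (simp add: cauchy_profile_def)

lemma nn_integral_le_suminf_cauchy_profile:
  fixes F :: "real \<Rightarrow> real" and w A :: "nat \<Rightarrow> real"
  assumes w: "\<And>n. 0 \<le> w n" "summable w" and A: "\<And>n. 0 \<le> A n" "\<And>n. A n \<le> M" and B: "0 < B"
    and F: "\<And>x. F x \<le> 2 * (\<Sum>n. w n * cauchy_profile (A n) B x)"
  shows "(\<integral>\<^sup>+x. ennreal (F x) \<partial>lborel) \<le> ennreal (2 * pi * B * (\<Sum>n. w n * A n))"
proof -
  have A_bounded: "\<bar>A n\<bar> \<le> M" for n
    using A by simp
  have profile_bounded: "\<bar>cauchy_profile (A n) B x\<bar> \<le> M\<^sup>2" for n x
    using cauchy_profile_le[of "A n" B x] cauchy_profile_nonneg[of "A n" B x]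
      power_mono[OF A(2)[of n] A(1)[of n], of 2] by simp
  have sum_profile: "summable (\<lambda>n. w n * cauchy_profile (A n) B x)" for x
    using w profile_bounded by (rule summable_mult_of_bounded)
  have sum_A: "summable (\<lambda>n. w n * A n)"
    using w A_bounded by (rule summable_mult_of_bounded)
  have "(\<integral>\<^sup>+x. ennreal (F x) \<partial>lborel) \<le> (\<integral>\<^sup>+x. ennreal (\<Sum>n. 2 * w n * cauchy_profile (A n) B x) \<partial>lborel)"
    using F sum_profile by (intro nn_integral_mono ennreal_leI) (simp add: suminf_mult mult.assoc)
  also have "\<dots> = (\<integral>\<^sup>+x. (\<Sum>n. ennreal (2 * w n * cauchy_profile (A n) B x)) \<partial>lborel)"
    using sum_profile w(1) cauchy_profile_nonneg
    by (intro nn_integral_cong suminf_ennreal2[symmetric]) (auto simp: mult.assoc intro: summable_mult)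
  also have "\<dots> = (\<Sum>n. \<integral>\<^sup>+x. ennreal (2 * w n * cauchy_profile (A n) B x) \<partial>lborel)"
    by (intro nn_integral_suminf) measurable
  also have "\<dots> = (\<Sum>n. ennreal (2 * pi * B * (w n * A n)))"
  proof (intro suminf_cong)
    fix n
    have "(\<integral>\<^sup>+x. ennreal (2 * w n * cauchy_profile (A n) B x) \<partial>lborel)
        = ennreal (2 * w n) * (\<integral>\<^sup>+x. ennreal (cauchy_profile (A n) B x) \<partial>lborel)"
      using w(1)[of n] by (simp add: ennreal_mult nn_integral_cmult cauchy_profile_nonneg)
    also have "\<dots> = ennreal (2 * pi * B * (w n * A n))"
      using w(1)[of n] A(1)[of n] B
      by (simp add: nn_integral_cauchy_profile ennreal_mult[symmetric] mult_ac)
    finally show "(\<integral>\<^sup>+x. ennreal (2 * w n * cauchy_profile (A n) B x) \<partial>lborel) = ennreal (2 * pi * B * (w n * A n))" .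
  qed
  also have "\<dots> = ennreal (2 * pi * B * (\<Sum>n. w n * A n))"
    using sum_A w(1) A(1) B by (simp add: suminf_ennreal2 summable_mult suminf_mult)
  finally show ?thesis .
qed

lemma nn_integral_power2_suminf_le:
  fixes w A :: "nat \<Rightarrow> real" and b :: "nat \<Rightarrow> real \<Rightarrow> real"
  assumes w: "\<And>n. 0 \<le> w n" "w sums W" "W \<le> 1"
    and f: "\<And>x. (\<lambda>n. w n * b n x) sums f x"
    and A: "\<And>n x. \<bar>b n x\<bar> \<le> A n" "\<And>n. A n \<le> M"
    and B: "\<And>n x. \<bar>x\<bar> * \<bar>b n x\<bar> \<le> B" "0 < B"
  shows "(\<integral>\<^sup>+x. ennreal ((f x)\<^sup>2) \<partial>lborel) \<le> ennreal (2 * pi * B * (\<Sum>n. w n * A n))"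
proof -
  have A_nonneg: "0 \<le> A n" for n
    using A(1)[of n 0] abs_ge_zero order_trans by blast
  show ?thesis
  proof (rule nn_integral_le_suminf_cauchy_profile[OF w(1) sums_summable[OF w(2)] A_nonneg A(2) B(2)])
    fix x
    have b_bounded: "\<bar>b n x\<bar> \<le> M" for n
      using A order_trans by blast
    have "\<bar>cauchy_profile (A n) B x\<bar> \<le> M\<^sup>2" for n
      using cauchy_profile_nonneg[of "A n" B x] cauchy_profile_le[of "A n" B x]
        power_mono[OF A(2) A_nonneg, of n 2] by simp
    hence profile_summable: "summable (\<lambda>n. w n * cauchy_profile (A n) B x)"
      using w(1) sums_summable[OF w(2)] by (rule summable_mult_of_bounded[rotated 2])
    have "\<bar>(b n x)\<^sup>2\<bar> \<le> M\<^sup>2" for n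
      using power_mono[OF b_bounded abs_ge_zero, of n 2] by simp
    hence square_summable: "summable (\<lambda>n. w n * (b n x)\<^sup>2)"
      using w(1) sums_summable[OF w(2)] by (rule summable_mult_of_bounded[rotated 2])
    have "(f x)\<^sup>2 = (\<Sum>n. w n * b n x)\<^sup>2"
      using f by (simp add: sums_iff)
    also have "\<dots> \<le> (\<Sum>n. w n * (b n x)\<^sup>2)"
      using w b_bounded by (rule power2_suminf_le_suminf_power2)
    also have "\<dots> \<le> (\<Sum>n. 2 * (w n * cauchy_profile (A n) B x))"
    proof (rule suminf_le[OF _ square_summable summable_mult[OF profile_summable]])
      fix n
      have "(b n x)\<^sup>2 \<le> 2 * cauchy_profile (A n) B x"
        using A(1) B by (rule power2_le_cauchy_profile)
      from mult_left_mono[OF this w(1)[of n]]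
      show "w n * (b n x)\<^sup>2 \<le> 2 * (w n * cauchy_profile (A n) B x)"
        by (simp add: mult.left_commute)
    qed
    also have "\<dots> = 2 * (\<Sum>n. w n * cauchy_profile (A n) B x)"
      using profile_summable by (rule suminf_mult)
    finally show "(f x)\<^sup>2 \<le> 2 * (\<Sum>n. w n * cauchy_profile (A n) B x)" .
  qed
qed

section \<open>Poisson weights\<close>

definition poisson_weight :: "real \<Rightarrow> nat \<Rightarrow> real" where
  "poisson_weight l n = exp (- l) * l ^ n / fact n"

lemma poisson_weight_nonneg: "0 \<le> l \<Longrightarrow> 0 \<le> poisson_weight l n"
  unfolding poisson_weight_def by simp

lemma poisson_weight_sums: "poisson_weight l sums 1"
proof -
  have "(\<lambda>n. exp (- l) * (l ^ n /\<^sub>R fact n)) sums (exp (- l) * exp l)"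
    by (intro sums_mult exp_converges)
  moreover have "(\<lambda>n. exp (- l) * (l ^ n /\<^sub>R fact n)) = poisson_weight l"
    by (rule ext) (simp add: poisson_weight_def divide_inverse)
  ultimately show ?thesis
    by (simp flip: exp_add)
qed

lemma poisson_weight_Suc: "poisson_weight l (Suc n) * real (Suc n) = l * poisson_weight l n"
  unfolding poisson_weight_def by (simp add: field_simps del: of_nat_Suc)

lemma poisson_weight_mean_sums: "(\<lambda>n. poisson_weight l n * real n) sums l"
proof -
  have "(\<lambda>n. poisson_weight l (Suc n) * real (Suc n)) sums (l * 1)"
    unfolding poisson_weight_Suc by (intro sums_mult poisson_weight_sums)
  hence "(\<lambda>n. poisson_weight l n * real n) sums (l * 1 + poisson_weight l 0 * real 0)"
    by (subst (asm) sums_Suc_iff)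
  thus ?thesis
    by simp
qed

lemma poisson_weight_factorial_moment_sums:
  "(\<lambda>n. poisson_weight l n * (real n * (real n - 1))) sums l\<^sup>2"
proof -
  have "poisson_weight l (Suc (Suc n)) * (real (Suc (Suc n)) * (real (Suc (Suc n)) - 1))
      = l\<^sup>2 * poisson_weight l n" for n
  proof -
    have "poisson_weight l (Suc (Suc n)) * (real (Suc (Suc n)) * (real (Suc (Suc n)) - 1))
        = (poisson_weight l (Suc (Suc n)) * real (Suc (Suc n))) * real (Suc n)"
      by (simp add: algebra_simps)
    also have "\<dots> = l\<^sup>2 * poisson_weight l n"
      by (simp only: poisson_weight_Suc power2_eq_square mult.assoc)
    finally show ?thesis .
  qed
  hence "(\<lambda>n. poisson_weight l (Suc (Suc n)) * (real (Suc (Suc n)) * (real (Suc (Suc n)) - 1))) sums (l\<^sup>2 * 1)"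
    by (simp only:) (intro sums_mult poisson_weight_sums)
  hence "(\<lambda>n. poisson_weight l (Suc n) * (real (Suc n) * (real (Suc n) - 1))) sums l\<^sup>2"
    by (subst (asm) sums_Suc_iff[where f = "\<lambda>n. poisson_weight l (Suc n) * (real (Suc n) * (real (Suc n) - 1))"]) simp
  hence "(\<lambda>n. poisson_weight l n * (real n * (real n - 1))) sums (l\<^sup>2 + poisson_weight l 0 * (real 0 * (real 0 - 1)))"
    by (subst (asm) sums_Suc_iff)
  thus ?thesis
    by simp
qed

lemma poisson_weight_variance_sums: "(\<lambda>n. poisson_weight l n * (real n - l)\<^sup>2) sums l"
proof -
  have "(\<lambda>n. poisson_weight l n * (real n * (real n - 1)) + (1 - 2 * l) * (poisson_weight l n * real n)
           + l\<^sup>2 * poisson_weight l n) sums (l\<^sup>2 + (1 - 2 * l) * l + l\<^sup>2 * 1)"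
    by (intro sums_add sums_mult poisson_weight_sums poisson_weight_mean_sums
        poisson_weight_factorial_moment_sums)
  thus ?thesis
    by (simp add: power2_eq_square algebra_simps)
qed

lemma summable_poisson_weight_mult:
  assumes "0 \<le> l" "\<And>n. \<bar>b n\<bar> \<le> M"
  shows "summable (\<lambda>n. poisson_weight l n * b n)"
  using poisson_weight_nonneg[OF assms(1)] sums_summable[OF poisson_weight_sums] assms(2)
  by (rule summable_mult_of_bounded)

lemma nat_powr_neg_le_1: "0 \<le> p \<Longrightarrow> real n powr (- p) \<le> 1"
  using powr_mono[of "- p" 0 "real n"] by (cases n) auto

lemma summable_poisson_weight_powr:
  assumes "0 \<le> l" "0 \<le> p"
  shows "summable (\<lambda>n. poisson_weight l n * real n powr (- p))"
  using assms nat_powr_neg_le_1 by (intro summable_poisson_weight_mult) auto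

lemma suminf_poisson_weight_le_quadratic:
  assumes "0 \<le> l" "summable (\<lambda>n. poisson_weight l n * f n)"
    and "\<And>n. f n \<le> \<alpha> + \<beta> * (real n - l)\<^sup>2"
  shows "(\<Sum>n. poisson_weight l n * f n) \<le> \<alpha> + \<beta> * l"
proof (rule sums_le[OF _ summable_sums[OF assms(2)]])
  show "poisson_weight l n * f n \<le> poisson_weight l n * (\<alpha> + \<beta> * (real n - l)\<^sup>2)" for n
    using assms(3) poisson_weight_nonneg[OF assms(1)] by (rule mult_left_mono)
  have "(\<lambda>n. \<alpha> * poisson_weight l n + \<beta> * (poisson_weight l n * (real n - l)\<^sup>2)) sums (\<alpha> * 1 + \<beta> * l)"
    by (intro sums_add sums_mult poisson_weight_sums poisson_weight_variance_sums)
  thus "(\<lambda>n. poisson_weight l n * (\<alpha> + \<beta> * (real n - l)\<^sup>2)) sums (\<alpha> + \<beta> * l)"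
    by (simp add: algebra_simps)
qed

lemma nat_powr_neg_le_quadratic:
  assumes l: "0 < l" and p: "0 < p" "p \<le> 1"
  shows "real n powr (- p) \<le> 2 * l powr (- p) + 4 / l\<^sup>2 * (real n - l)\<^sup>2"
proof (cases "l \<le> 2 * real n")
  case True
  have "real n powr (- p) \<le> (l / 2) powr (- p)"
    using True l p by (intro powr_mono2') auto
  also have "\<dots> = 2 powr p * l powr (- p)"
    using l by (simp add: powr_divide powr_minus field_simps)
  also have "\<dots> \<le> 2 * l powr (- p)"
    using powr_mono[of p 1 2] p by (intro mult_right_mono) auto
  finally show ?thesis
    using l by (simp add: add_increasing2)
next
  case False
  hence "(l / 2)\<^sup>2 \<le> (l - real n)\<^sup>2"
    using l by (intro power_mono) auto
  hence "1 \<le> 4 / l\<^sup>2 * (real n - l)\<^sup>2"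
    using l by (simp add: power2_commute field_simps power2_eq_square)
  thus ?thesis
    using nat_powr_neg_le_1[of p n] p powr_ge_zero[of l "- p"] by linarith
qed

text \<open>Only the terms \<open>n \<ge> 1\<close> contribute, since \<open>0 powr x = 0\<close> in Isabelle.\<close>

lemma poisson_negative_moment_le:
  assumes l: "0 < l" and p: "0 < p" "p \<le> 1"
  shows "(\<Sum>n. poisson_weight l n * real n powr (- p)) \<le> 6 * l powr (- p)"
proof -
  have summable: "summable (\<lambda>n. poisson_weight l n * real n powr (- p))"
    using l p by (intro summable_poisson_weight_powr) auto
  show ?thesis
  proof (cases "1 \<le> l")
    case True
    have "(\<Sum>n. poisson_weight l n * real n powr (- p)) \<le> 2 * l powr (- p) + 4 / l\<^sup>2 * l"
      using l summable nat_powr_neg_le_quadratic[OF l p] by (intro suminf_poisson_weight_le_quadratic) auto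
    also have "4 / l\<^sup>2 * l \<le> 4 * l powr (- p)"
      using powr_mono[of "- 1" "- p" l] True p l by (simp add: powr_minus power2_eq_square field_simps)
    finally show ?thesis
      by simp
  next
    case False
    have "(\<Sum>n. poisson_weight l n * real n powr (- p)) \<le> 1 + 0 * l"
      using l p summable nat_powr_neg_le_1 by (intro suminf_poisson_weight_le_quadratic) auto
    also have "\<dots> \<le> l powr (- p)"
      using powr_mono'[of "- p" 0 l] False l p by simp
    finally show ?thesis
      using powr_ge_zero[of l "- p"] by linarith
  qed
qed

section \<open>Poisson averages of kernels with stable-type bounds\<close>

definition poisson_average :: "(real \<Rightarrow> real \<Rightarrow> real) \<Rightarrow> real \<Rightarrow> real \<Rightarrow> real \<Rightarrow> real" where
  "poisson_average G \<epsilon> t x =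
     exp (- t / \<epsilon>) * (\<Sum>n. (t / \<epsilon>) ^ Suc n / fact (Suc n) * G (real (Suc n) * \<epsilon>) x)"

locale kernel_estimates =
  fixes a K1 K2 K3 :: real and G :: "real \<Rightarrow> real \<Rightarrow> real"
  assumes a_gt_1: "1 < a"
    and K1_nonneg: "0 \<le> K1" and K2_pos: "0 < K2" and K3_nonneg: "0 \<le> K3"
    and abs_le: "0 < u \<Longrightarrow> \<bar>G u x\<bar> \<le> K1 * u powr (- 1 / a)"
    and abs_mult_abs_le: "0 < u \<Longrightarrow> \<bar>x\<bar> * \<bar>G u x\<bar> \<le> K2"
    and abs_diff_le: "0 < u \<Longrightarrow> 0 < s \<Longrightarrow>
                        \<bar>G u x - G s x\<bar> \<le> K3 * \<bar>u - s\<bar> * min u s powr (- (a + 1) / a)"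
begin

lemma powr_neg_inv_antimono: "0 < u \<Longrightarrow> u \<le> v \<Longrightarrow> v powr (- 1 / a) \<le> u powr (- 1 / a)"
  using a_gt_1 by (intro powr_mono2') auto

text \<open>The Poisson average has no \<open>n = 0\<close> term; padding it with \<open>0\<close> lets it be
  weighted by the full Poisson distribution.\<close>

definition grid :: "real \<Rightarrow> real \<Rightarrow> nat \<Rightarrow> real" where
  "grid \<epsilon> x n = (if n = 0 then 0 else G (real n * \<epsilon>) x)"

lemma abs_grid_le: "0 < \<epsilon> \<Longrightarrow> \<bar>grid \<epsilon> x n\<bar> \<le> K1 * (real n * \<epsilon>) powr (- 1 / a)"
  using abs_le[of "real n * \<epsilon>" x] by (cases "n = 0") (auto simp: grid_def)

lemma abs_grid_le_eps: "0 < \<epsilon> \<Longrightarrow> \<bar>grid \<epsilon> x n\<bar> \<le> K1 * \<epsilon> powr (- 1 / a)"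
  using abs_le[of "real n * \<epsilon>" x] powr_neg_inv_antimono[of \<epsilon> "real n * \<epsilon>"] K1_nonneg
  by (cases n) (auto simp: grid_def intro: order_trans mult_left_mono)

lemma abs_mult_abs_grid_le: "0 < \<epsilon> \<Longrightarrow> \<bar>x\<bar> * \<bar>grid \<epsilon> x n\<bar> \<le> K2"
  using abs_mult_abs_le[of "real n * \<epsilon>" x] K2_pos by (simp add: grid_def)

lemma poisson_average_sums:
  assumes "0 < \<epsilon>" "0 \<le> t"
  shows "(\<lambda>n. poisson_weight (t / \<epsilon>) n * grid \<epsilon> x n) sums poisson_average G \<epsilon> t x"
proof -
  define l where "l = t / \<epsilon>"
  have "summable (\<lambda>n. poisson_weight l n * grid \<epsilon> x n)"
    using assms abs_grid_le_eps by (intro summable_poisson_weight_mult) (auto simp: l_def)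
  then obtain S where S: "(\<lambda>n. poisson_weight l n * grid \<epsilon> x n) sums S"
    by (auto simp: summable_def)
  have "(\<lambda>n. poisson_weight l (Suc n) * G (real (Suc n) * \<epsilon>) x) sums S"
    using S sums_Suc_iff[of "\<lambda>n. poisson_weight l n * grid \<epsilon> x n" S] by (simp add: grid_def)
  hence "(\<lambda>n. exp l * (poisson_weight l (Suc n) * G (real (Suc n) * \<epsilon>) x)) sums (exp l * S)"
    by (rule sums_mult)
  moreover have "exp l * (poisson_weight l (Suc n) * G (real (Suc n) * \<epsilon>) x)
      = l ^ Suc n / fact (Suc n) * G (real (Suc n) * \<epsilon>) x" for n
    by (simp add: poisson_weight_def mult_ac flip: exp_add)
  ultimately have "(\<lambda>n. l ^ Suc n / fact (Suc n) * G (real (Suc n) * \<epsilon>) x) sums (exp l * S)"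
    by simp
  hence "poisson_average G \<epsilon> t x = exp (- l) * (exp l * S)"
    by (simp add: poisson_average_def l_def sums_unique[symmetric])
  also have "\<dots> = S"
    by (simp flip: exp_add mult.assoc)
  finally show ?thesis
    using S by (simp add: l_def)
qed

lemma nn_integral_poisson_average_sq_le:
  assumes \<epsilon>: "0 < \<epsilon>" and t: "0 < t"
  shows "(\<integral>\<^sup>+x. ennreal ((poisson_average G \<epsilon> t x)\<^sup>2) \<partial>lborel) \<le> ennreal (12 * pi * K1 * K2 * t powr (- 1 / a))"
proof -
  define l where "l = t / \<epsilon>"
  have l: "0 < l"
    using \<epsilon> t by (simp add: l_def)
  define A where "A n = K1 * (real n * \<epsilon>) powr (- 1 / a)" for n
  have A_le: "A n \<le> K1 * \<epsilon> powr (- 1 / a)" for n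
    using powr_neg_inv_antimono[of \<epsilon> "real n * \<epsilon>"] \<epsilon> K1_nonneg
    by (cases n) (auto simp: A_def intro: mult_left_mono)
  have L2: "(\<integral>\<^sup>+x. ennreal ((poisson_average G \<epsilon> t x)\<^sup>2) \<partial>lborel) \<le> ennreal (2 * pi * K2 * (\<Sum>n. poisson_weight l n * A n))"
    using l poisson_weight_sums poisson_average_sums[OF \<epsilon>] t abs_grid_le[OF \<epsilon>] A_le
      abs_mult_abs_grid_le[OF \<epsilon>] K2_pos
    by (intro nn_integral_power2_suminf_le[where b = "\<lambda>n x. grid \<epsilon> x n"])
       (auto simp: l_def A_def poisson_weight_nonneg)
  have "(\<Sum>n. poisson_weight l n * A n)
      = K1 * \<epsilon> powr (- 1 / a) * (\<Sum>n. poisson_weight l n * real n powr (- (1 / a)))"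
  proof -
    have "(\<lambda>n. poisson_weight l n * A n)
        = (\<lambda>n. K1 * \<epsilon> powr (- 1 / a) * (poisson_weight l n * real n powr (- (1 / a))))"
      using \<epsilon> by (intro ext) (simp add: A_def powr_mult)
    thus ?thesis
      using l a_gt_1 by (simp add: suminf_mult summable_poisson_weight_powr)
  qed
  also have "\<dots> \<le> K1 * \<epsilon> powr (- 1 / a) * (6 * l powr (- (1 / a)))"
    using poisson_negative_moment_le[OF l, of "1 / a"] a_gt_1 K1_nonneg by (intro mult_left_mono) auto
  also have "\<dots> = 6 * K1 * t powr (- 1 / a)"
    using \<epsilon> t by (simp add: l_def powr_divide powr_minus field_simps)
  finally have "2 * pi * K2 * (\<Sum>n. poisson_weight l n * A n) \<le> 2 * pi * K2 * (6 * K1 * t powr (- 1 / a))"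
    using K2_pos by (intro mult_left_mono) auto
  with L2 show ?thesis
    by (auto simp: mult_ac elim!: order_trans intro!: ennreal_leI)
qed

definition jump_bound :: "real \<Rightarrow> real \<Rightarrow> nat \<Rightarrow> real" where
  "jump_bound \<epsilon> s n = (if n = 0 then K1 * s powr (- 1 / a)
     else min (K3 * \<bar>real n * \<epsilon> - s\<bar> * min (real n * \<epsilon>) s powr (- (a + 1) / a))
              (K1 * (real n * \<epsilon>) powr (- 1 / a) + K1 * s powr (- 1 / a)))"

lemma jump_bound_nonneg: "0 \<le> jump_bound \<epsilon> s n"
  using K1_nonneg K3_nonneg by (simp add: jump_bound_def)

lemma jump_bound_le: "jump_bound \<epsilon> s n \<le> K1 * (real n * \<epsilon>) powr (- 1 / a) + K1 * s powr (- 1 / a)"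
  by (simp add: jump_bound_def)

lemma jump_bound_le_eps:
  assumes "0 < \<epsilon>"
  shows "jump_bound \<epsilon> s n \<le> K1 * \<epsilon> powr (- 1 / a) + K1 * s powr (- 1 / a)"
proof -
  have "K1 * (real n * \<epsilon>) powr (- 1 / a) \<le> K1 * \<epsilon> powr (- 1 / a)"
    using powr_neg_inv_antimono[of \<epsilon> "real n * \<epsilon>"] assms K1_nonneg
    by (cases n) (auto intro: mult_left_mono)
  thus ?thesis
    using jump_bound_le[of \<epsilon> s n] by linarith
qed

lemma abs_grid_minus_le_jump_bound:
  assumes \<epsilon>: "0 < \<epsilon>" and s: "0 < s"
  shows "\<bar>grid \<epsilon> x n - G s x\<bar> \<le> jump_bound \<epsilon> s n"
proof (cases "n = 0")
  case False
  hence u: "0 < real n * \<epsilon>"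
    using \<epsilon> by simp
  have "\<bar>G (real n * \<epsilon>) x - G s x\<bar> \<le> K1 * (real n * \<epsilon>) powr (- 1 / a) + K1 * s powr (- 1 / a)"
    using abs_le[OF u, of x] abs_le[OF s, of x] by linarith
  thus ?thesis
    using False abs_diff_le[OF u s, of x] by (simp add: grid_def jump_bound_def)
qed (use abs_le[OF s] in \<open>simp add: grid_def jump_bound_def\<close>)

lemma abs_mult_abs_grid_minus_le:
  assumes "0 < \<epsilon>" "0 < s"
  shows "\<bar>x\<bar> * \<bar>grid \<epsilon> x n - G s x\<bar> \<le> 2 * K2"
proof -
  have "\<bar>x\<bar> * \<bar>grid \<epsilon> x n - G s x\<bar> \<le> \<bar>x\<bar> * \<bar>grid \<epsilon> x n\<bar> + \<bar>x\<bar> * \<bar>G s x\<bar>"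
    by (simp flip: distrib_left add: mult_left_mono abs_triangle_ineq4)
  thus ?thesis
    using abs_mult_abs_grid_le[OF assms(1), of x n] abs_mult_abs_le[OF assms(2), of x] by linarith
qed

lemma poisson_average_minus_sums:
  assumes "0 < \<epsilon>" "0 \<le> s"
  shows "(\<lambda>n. poisson_weight (s / \<epsilon>) n * (grid \<epsilon> x n - G s x)) sums (poisson_average G \<epsilon> s x - G s x)"
proof -
  have "(\<lambda>n. poisson_weight (s / \<epsilon>) n * grid \<epsilon> x n - poisson_weight (s / \<epsilon>) n * G s x)
      sums (poisson_average G \<epsilon> s x - 1 * G s x)"
    by (intro sums_diff poisson_average_sums assms sums_mult2 poisson_weight_sums)
  thus ?thesis
    by (simp add: right_diff_distrib)
qed

definition error_bound :: "real \<Rightarrow> real \<Rightarrow> real" where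
  "error_bound \<epsilon> s = (\<Sum>n. poisson_weight (s / \<epsilon>) n * jump_bound \<epsilon> s n)"

lemma summable_poisson_weight_jump_bound:
  "0 < \<epsilon> \<Longrightarrow> 0 \<le> s \<Longrightarrow> summable (\<lambda>n. poisson_weight (s / \<epsilon>) n * jump_bound \<epsilon> s n)"
  using jump_bound_le_eps jump_bound_nonneg
  by (intro summable_poisson_weight_mult[of _ _ "K1 * \<epsilon> powr (- 1 / a) + K1 * s powr (- 1 / a)"]) auto

lemma nn_integral_poisson_average_error_le:
  assumes \<epsilon>: "0 < \<epsilon>" and s: "0 < s"
  shows "(\<integral>\<^sup>+x. ennreal ((poisson_average G \<epsilon> s x - G s x)\<^sup>2) \<partial>lborel) \<le> ennreal (4 * pi * K2 * error_bound \<epsilon> s)"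
proof -
  have "(\<integral>\<^sup>+x. ennreal ((poisson_average G \<epsilon> s x - G s x)\<^sup>2) \<partial>lborel)
      \<le> ennreal (2 * pi * (2 * K2) * (\<Sum>n. poisson_weight (s / \<epsilon>) n * jump_bound \<epsilon> s n))"
    using \<epsilon> s poisson_weight_sums poisson_average_minus_sums[OF \<epsilon>] abs_grid_minus_le_jump_bound[OF \<epsilon> s]
      jump_bound_le_eps[OF \<epsilon>] abs_mult_abs_grid_minus_le[OF \<epsilon> s] K2_pos
    by (intro nn_integral_power2_suminf_le[where b = "\<lambda>n x. grid \<epsilon> x n - G s x"])
       (auto simp: poisson_weight_nonneg)
  thus ?thesis
    by (simp add: error_bound_def mult.assoc)
qed

lemma error_bound_le_near_zero:
  assumes \<epsilon>: "0 < \<epsilon>" and s: "0 < s"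
  shows "error_bound \<epsilon> s \<le> 7 * K1 * s powr (- 1 / a)"
proof -
  define l where "l = s / \<epsilon>"
  have l: "0 < l"
    using \<epsilon> s by (simp add: l_def)
  define Q where "Q = (\<Sum>n. poisson_weight l n * real n powr (- (1 / a)))"
  have "(\<lambda>n. poisson_weight l n * real n powr (- (1 / a))) sums Q"
    unfolding Q_def using l a_gt_1 by (intro summable_sums summable_poisson_weight_powr) auto
  hence majorant: "(\<lambda>n. K1 * s powr (- 1 / a) * poisson_weight l n
        + K1 * \<epsilon> powr (- 1 / a) * (poisson_weight l n * real n powr (- (1 / a))))
      sums (K1 * s powr (- 1 / a) * 1 + K1 * \<epsilon> powr (- 1 / a) * Q)"
    by (intro sums_add sums_mult poisson_weight_sums)
  have "error_bound \<epsilon> s \<le> K1 * s powr (- 1 / a) * 1 + K1 * \<epsilon> powr (- 1 / a) * Q"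
    unfolding error_bound_def l_def[symmetric]
  proof (rule sums_le[OF _ summable_sums majorant])
    show "summable (\<lambda>n. poisson_weight l n * jump_bound \<epsilon> s n)"
      using summable_poisson_weight_jump_bound[OF \<epsilon>, of s] s by (simp add: l_def)
    fix n
    have "jump_bound \<epsilon> s n \<le> K1 * s powr (- 1 / a) + K1 * \<epsilon> powr (- 1 / a) * real n powr (- (1 / a))"
      using jump_bound_le[of \<epsilon> s n] \<epsilon> by (simp add: powr_mult mult_ac)
    from mult_left_mono[OF this poisson_weight_nonneg[of l n]] l
    show "poisson_weight l n * jump_bound \<epsilon> s n
        \<le> K1 * s powr (- 1 / a) * poisson_weight l n
          + K1 * \<epsilon> powr (- 1 / a) * (poisson_weight l n * real n powr (- (1 / a)))"
      by (simp add: algebra_simps)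
  qed
  also have "K1 * \<epsilon> powr (- 1 / a) * Q \<le> K1 * \<epsilon> powr (- 1 / a) * (6 * l powr (- (1 / a)))"
    unfolding Q_def using poisson_negative_moment_le[OF l, of "1 / a"] a_gt_1 K1_nonneg
    by (intro mult_left_mono) auto
  also have "K1 * \<epsilon> powr (- 1 / a) * (6 * l powr (- (1 / a))) = 6 * K1 * s powr (- 1 / a)"
    using \<epsilon> s by (simp add: l_def powr_divide powr_minus field_simps)
  finally show ?thesis
    by simp
qed

lemma jump_bound_le_quadratic:
  assumes \<epsilon>: "0 < \<epsilon>" and \<epsilon>_le: "\<epsilon> \<le> s"
  shows "jump_bound \<epsilon> s n \<le> K3 * (s / 2) powr (- (a + 1) / a) * \<bar>real n * \<epsilon> - s\<bar>
           + 8 * K1 * \<epsilon> powr (- 1 / a) / (s / \<epsilon>)\<^sup>2 * (real n - s / \<epsilon>)\<^sup>2"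
    (is "_ \<le> ?lip + ?far")
proof -
  have s: "0 < s"
    using \<epsilon> \<epsilon>_le by simp
  have lip_nonneg: "0 \<le> ?lip" and far_nonneg: "0 \<le> ?far"
    using K1_nonneg K3_nonneg by simp_all
  show ?thesis
  proof (cases "s \<le> 2 * (real n * \<epsilon>)")
    case True
    hence "n \<noteq> 0"
      using s by (cases n) auto
    have "min (real n * \<epsilon>) s powr (- (a + 1) / a) \<le> (s / 2) powr (- (a + 1) / a)"
      using True s a_gt_1 by (intro powr_mono2') (auto simp: divide_nonpos_pos)
    hence "K3 * \<bar>real n * \<epsilon> - s\<bar> * min (real n * \<epsilon>) s powr (- (a + 1) / a) \<le> ?lip"
      using K3_nonneg by (simp add: mult_left_mono mult_ac)
    hence "jump_bound \<epsilon> s n \<le> ?lip"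
      using \<open>n \<noteq> 0\<close> by (simp add: jump_bound_def)
    thus ?thesis
      using far_nonneg by linarith
  next
    case False
    have "s powr (- 1 / a) \<le> \<epsilon> powr (- 1 / a)"
      using \<epsilon> \<epsilon>_le by (rule powr_neg_inv_antimono)
    hence "jump_bound \<epsilon> s n \<le> 2 * K1 * \<epsilon> powr (- 1 / a)"
      using jump_bound_le_eps[OF \<epsilon>, of s n] K1_nonneg mult_left_mono by fastforce
    also have "\<dots> \<le> ?far"
    proof -
      have "s / \<epsilon> / 2 \<le> s / \<epsilon> - real n"
        using False \<epsilon> by (simp add: field_simps)
      hence "(s / \<epsilon> / 2)\<^sup>2 \<le> (s / \<epsilon> - real n)\<^sup>2"
        using s \<epsilon> by (intro power_mono) auto
      hence "1 \<le> 4 / (s / \<epsilon>)\<^sup>2 * (real n - s / \<epsilon>)\<^sup>2"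
        using s \<epsilon> by (simp add: power2_commute field_simps)
      from mult_left_mono[OF this, of "2 * K1 * \<epsilon> powr (- 1 / a)"] K1_nonneg
      show ?thesis
        by (simp add: field_simps)
    qed
    finally show ?thesis
      using lip_nonneg by linarith
  qed
qed

lemma error_bound_le_away_from_zero:
  assumes \<epsilon>: "0 < \<epsilon>" and "\<epsilon> \<le> \<eta>" "\<eta> \<le> s" "s \<le> t"
  shows "error_bound \<epsilon> s \<le> K3 * (\<eta> / 2) powr (- (a + 1) / a) * ((t + 1) / 2) * sqrt \<epsilon>
           + 8 * K1 / \<eta> * \<epsilon> powr (1 - 1 / a)"
proof -
  have s: "0 < s" "\<epsilon> \<le> s"
    using assms by simp_all
  define l where "l = s / \<epsilon>"
  have l: "0 < l"
    using \<epsilon> s by (simp add: l_def)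
  define c2 where "c2 = K3 * (s / 2) powr (- (a + 1) / a)"
  define c3 where "c3 = 8 * K1 * \<epsilon> powr (- 1 / a) / l\<^sup>2"
  have c2: "0 \<le> c2"
    using K3_nonneg by (simp add: c2_def)
  txt \<open>The distance \<open>\<bar>n \<epsilon> - s\<bar>\<close> is majorised by a quadratic in \<open>n - s / \<epsilon>\<close>, whose Poisson
    average is controlled by the variance \<open>s / \<epsilon>\<close>; this is where the rate \<open>sqrt \<epsilon>\<close> comes from.\<close>
  have "jump_bound \<epsilon> s n \<le> c2 * sqrt \<epsilon> / 2 + (c2 * (\<epsilon> * sqrt \<epsilon>) / 2 + c3) * (real n - l)\<^sup>2" for n
    using jump_bound_le_quadratic[OF \<epsilon> s(2), of n] mult_left_mono[OF abs_mult_sub_le_quadratic[OF \<epsilon>, of "real n" s] c2]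
    by (simp add: c2_def c3_def l_def algebra_simps)
  hence "error_bound \<epsilon> s \<le> c2 * sqrt \<epsilon> / 2 + (c2 * (\<epsilon> * sqrt \<epsilon>) / 2 + c3) * l"
    unfolding error_bound_def l_def[symmetric]
    using l summable_poisson_weight_jump_bound[OF \<epsilon>, of s] s
    by (intro suminf_poisson_weight_le_quadratic) (auto simp: l_def)
  also have "\<dots> = c2 * ((s + 1) / 2) * sqrt \<epsilon> + 8 * K1 / s * \<epsilon> powr (1 - 1 / a)"
  proof -
    have "\<epsilon> * l = s"
      using \<epsilon> by (simp add: l_def)
    moreover have "\<epsilon> powr (1 - 1 / a) = \<epsilon> * \<epsilon> powr (- 1 / a)"
      using \<epsilon> by (simp add: powr_diff powr_minus divide_inverse)
    ultimately show ?thesis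
      using \<epsilon> s by (simp add: c3_def l_def power2_eq_square field_simps)
  qed
  also have "\<dots> \<le> K3 * (\<eta> / 2) powr (- (a + 1) / a) * ((t + 1) / 2) * sqrt \<epsilon> + 8 * K1 / \<eta> * \<epsilon> powr (1 - 1 / a)"
  proof (intro add_mono mult_right_mono mult_mono)
    show "c2 \<le> K3 * (\<eta> / 2) powr (- (a + 1) / a)"
      unfolding c2_def using assms a_gt_1 K3_nonneg
      by (intro mult_left_mono powr_mono2') (auto simp: divide_nonpos_pos)
    show "8 * K1 / s \<le> 8 * K1 / \<eta>"
      using assms K1_nonneg by (intro divide_left_mono) auto
  qed (use assms K3_nonneg K1_nonneg in auto)
  finally show ?thesis .
qed

lemma nn_integral_poisson_average_error_uniformly_small:
  assumes \<eta>: "0 < \<eta>"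
  shows "\<exists>\<beta>. (\<beta> \<longlongrightarrow> 0) (at_right 0) \<and> (\<forall>\<^sub>F \<epsilon> in at_right 0. \<forall>s\<in>{\<eta>..t}.
           (\<integral>\<^sup>+x. ennreal ((poisson_average G \<epsilon> s x - G s x)\<^sup>2) \<partial>lborel) \<le> ennreal (\<beta> \<epsilon>))"
proof (intro exI conjI)
  define \<beta> where "\<beta> \<epsilon> = 4 * pi * K2 * (K3 * (\<eta> / 2) powr (- (a + 1) / a) * ((t + 1) / 2) * sqrt \<epsilon>
      + 8 * K1 / \<eta> * \<epsilon> powr (1 - 1 / a))" for \<epsilon>
  have "(\<beta> \<longlongrightarrow> 4 * pi * K2 * (K3 * (\<eta> / 2) powr (- (a + 1) / a) * ((t + 1) / 2) * sqrt 0
      + 8 * K1 / \<eta> * 0)) (at_right 0)"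
    unfolding \<beta>_def using a_gt_1 by (intro tendsto_intros tendsto_zero_powrI) (auto simp: eventually_at_filter)
  thus "(\<beta> \<longlongrightarrow> 0) (at_right 0)"
    by simp
  show "\<forall>\<^sub>F \<epsilon> in at_right 0. \<forall>s\<in>{\<eta>..t}.
      (\<integral>\<^sup>+x. ennreal ((poisson_average G \<epsilon> s x - G s x)\<^sup>2) \<partial>lborel) \<le> ennreal (\<beta> \<epsilon>)"
    unfolding eventually_at_right_field using \<eta>
  proof (intro exI[of _ \<eta>] conjI allI impI ballI)
    fix \<epsilon> s :: real
    assume "0 < \<epsilon>" "\<epsilon> < \<eta>" "s \<in> {\<eta>..t}"
    hence "4 * pi * K2 * error_bound \<epsilon> s \<le> \<beta> \<epsilon>"
      unfolding \<beta>_def using K2_pos by (intro mult_left_mono error_bound_le_away_from_zero) auto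
    with nn_integral_poisson_average_error_le[of \<epsilon> s] \<open>0 < \<epsilon>\<close> \<open>0 < \<eta>\<close> \<open>s \<in> {\<eta>..t}\<close>
    show "(\<integral>\<^sup>+x. ennreal ((poisson_average G \<epsilon> s x - G s x)\<^sup>2) \<partial>lborel) \<le> ennreal (\<beta> \<epsilon>)"
      by (auto elim!: order_trans intro!: ennreal_leI)
  qed
qed

lemma tendsto_nn_integral_poisson_average_error:
  assumes "0 \<le> t"
  shows "((\<lambda>\<epsilon>. \<integral>\<^sup>+ s\<in>{0..t}. (\<integral>\<^sup>+x. ennreal ((poisson_average G \<epsilon> s x - G s x)\<^sup>2) \<partial>lborel) \<partial>lborel)
           \<longlongrightarrow> 0) (at_right 0)"
proof (rule tendsto_set_nn_integral_Icc_zero[OF _ _ assms _ nn_integral_poisson_average_error_uniformly_small])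
  show "0 \<le> 28 * pi * K1 * K2" "1 / a < 1"
    using K1_nonneg K2_pos a_gt_1 by auto
  fix \<epsilon> s :: real
  assume "0 < \<epsilon>" "0 < s"
  hence "4 * pi * K2 * error_bound \<epsilon> s \<le> 4 * pi * K2 * (7 * K1 * s powr (- 1 / a))"
    using K2_pos by (intro mult_left_mono error_bound_le_near_zero) auto
  with nn_integral_poisson_average_error_le[OF \<open>0 < \<epsilon>\<close> \<open>0 < s\<close>]
  show "(\<integral>\<^sup>+x. ennreal ((poisson_average G \<epsilon> s x - G s x)\<^sup>2) \<partial>lborel)
      \<le> ennreal (28 * pi * K1 * K2 * s powr (- (1 / a)))"
    by (auto simp: mult_ac elim!: order_trans intro!: ennreal_leI)
qed

end

section \<open>The strictly stable density\<close>

locale stable_law =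
  fixes a \<delta> :: real
  assumes a_gt_1: "1 < a" and a_le_2: "a \<le> 2" and abs_\<delta>_le: "\<bar>\<delta>\<bar> \<le> 2 - a"
begin

definition c0 :: real where
  "c0 = cos (\<delta> * pi / 2)"

lemma c0_pos: "0 < c0"
proof -
  have "- 1 < \<delta>" "\<delta> < 1"
    using a_gt_1 abs_\<delta>_le by linarith+
  hence "- 1 * pi < \<delta> * pi" "\<delta> * pi < 1 * pi"
    using pi_gt_zero by (intro mult_strict_right_mono; simp)+
  hence "- (pi / 2) < \<delta> * pi / 2" "\<delta> * pi / 2 < pi / 2"
    by simp_all
  thus ?thesis
    unfolding c0_def by (intro cos_gt_zero_pi)
qed

lemma c0_le_cos: "c0 \<le> cos (\<delta> * pi * sgn \<xi> / 2)"
  unfolding c0_def by (cases "\<xi> > 0"; cases "\<xi> < 0") auto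

definition fourier_integrand :: "real \<Rightarrow> real \<Rightarrow> real \<Rightarrow> complex" where
  "fourier_integrand u x \<xi> = exp (\<i> * complex_of_real (\<xi> * x)
     - complex_of_real (u * \<bar>\<xi>\<bar> powr a) * exp (- \<i> * complex_of_real (\<delta> * pi * sgn \<xi> / 2)))"

lemma fourier_integrand_measurable [measurable]: "fourier_integrand u x \<in> borel_measurable borel"
  unfolding fourier_integrand_def by measurable

lemma stableG_eq: "stableG a \<delta> u x = Re (integral\<^sup>L lborel (fourier_integrand u x)) / (2 * pi)"
  unfolding stableG_def fourier_integrand_def by simp

lemma norm_fourier_integrand_le:
  assumes "0 \<le> u"
  shows "norm (fourier_integrand u x \<xi>) \<le> exp (- c0 * u * \<bar>\<xi>\<bar> powr a)"
proof -
  have "norm (fourier_integrand u x \<xi>) = exp (- (u * \<bar>\<xi>\<bar> powr a) * cos (\<delta> * pi * sgn \<xi> / 2))"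
    unfolding fourier_integrand_def norm_exp_eq_Re by (simp add: Re_exp)
  also have "\<dots> \<le> exp (- c0 * u * \<bar>\<xi>\<bar> powr a)"
    using mult_right_mono[OF c0_le_cos[of \<xi>], of "u * \<bar>\<xi>\<bar> powr a"] assms by (simp add: mult_ac)
  finally show ?thesis .
qed

definition moment :: "real \<Rightarrow> real" where
  "moment p = enn2real (\<integral>\<^sup>+\<eta>. ennreal (\<bar>\<eta>\<bar> powr p * exp (- c0 * \<bar>\<eta>\<bar> powr a)) \<partial>lborel)"

lemma nn_integral_powr_mult_exp_eq_moment:
  assumes "0 < u" "0 \<le> p" "p \<le> 2"
  shows "(\<integral>\<^sup>+\<xi>. ennreal (\<bar>\<xi>\<bar> powr p * exp (- c0 * u * \<bar>\<xi>\<bar> powr a)) \<partial>lborel)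
       = ennreal (u powr (- (p + 1) / a) * moment p)"
  using nn_integral_powr_mult_exp_scale[of a u p c0] nn_integral_powr_mult_exp_finite[of a c0 p]
    assms a_gt_1 c0_pos
  by (simp add: moment_def ennreal_mult ennreal_enn2real_if less_top[symmetric])

text \<open>The case \<open>p = 0\<close> needs an extra step, since \<open>0 powr 0 = 0\<close> in Isabelle.\<close>

lemma nn_integral_exp_eq_moment:
  assumes "0 < u"
  shows "(\<integral>\<^sup>+\<xi>. ennreal (exp (- c0 * u * \<bar>\<xi>\<bar> powr a)) \<partial>lborel) = ennreal (u powr (- 1 / a) * moment 0)"
proof -
  have "(\<integral>\<^sup>+\<xi>. ennreal (exp (- c0 * u * \<bar>\<xi>\<bar> powr a)) \<partial>lborel)
      = (\<integral>\<^sup>+\<xi>. ennreal (\<bar>\<xi>\<bar> powr 0 * exp (- c0 * u * \<bar>\<xi>\<bar> powr a)) \<partial>lborel)"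
    by (intro nn_integral_cong_AE) (use AE_lborel_singleton[of 0] in \<open>auto elim!: eventually_mono\<close>)
  thus ?thesis
    using nn_integral_powr_mult_exp_eq_moment[OF assms, of 0] by simp
qed

lemma integrable_powr_mult_exp:
  assumes "0 < u" "0 \<le> p" "p \<le> 2"
  shows "integrable lborel (\<lambda>\<xi>. \<bar>\<xi>\<bar> powr p * exp (- c0 * u * \<bar>\<xi>\<bar> powr a))"
  using nn_integral_powr_mult_exp_eq_moment[OF assms] by (simp add: integrable_iff_bounded)

lemma integrable_exp:
  assumes "0 < u"
  shows "integrable lborel (\<lambda>\<xi>. exp (- c0 * u * \<bar>\<xi>\<bar> powr a))"
  using nn_integral_exp_eq_moment[OF assms] by (simp add: integrable_iff_bounded)

lemma integrable_fourier_integrand: "0 < u \<Longrightarrow> integrable lborel (fourier_integrand u x)"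
  by (rule Bochner_Integration.integrable_bound[OF integrable_exp])
     (use norm_fourier_integrand_le in auto)

definition K1 :: real where
  "K1 = moment 0 / (2 * pi)"

definition K2 :: real where
  "K2 = (1 + a * moment (a - 1)) / pi"

definition K3 :: real where
  "K3 = moment a / pi"

lemma abs_stableG_le:
  assumes u: "0 < u"
  shows "\<bar>stableG a \<delta> u x\<bar> \<le> K1 * u powr (- 1 / a)"
proof -
  have "norm (integral\<^sup>L lborel (fourier_integrand u x)) \<le> u powr (- 1 / a) * moment 0"
    using integrable_fourier_integrand[OF u] norm_fourier_integrand_le nn_integral_exp_eq_moment[OF u] u
    by (intro norm_integral_le_nn_integral) (auto simp: moment_def)
  hence "\<bar>Re (integral\<^sup>L lborel (fourier_integrand u x))\<bar> \<le> u powr (- 1 / a) * moment 0"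
    using abs_Re_le_cmod order_trans by blast
  thus ?thesis
    by (simp add: stableG_eq K1_def abs_div divide_right_mono mult_ac)
qed

lemma norm_fourier_integrand_diff_le:
  assumes "0 < u" "0 < s"
  shows "norm (fourier_integrand u x \<xi> - fourier_integrand s x \<xi>)
       \<le> 2 * \<bar>u - s\<bar> * (\<bar>\<xi>\<bar> powr a * exp (- c0 * min u s * \<bar>\<xi>\<bar> powr a))"
proof -
  define Z where "Z = complex_of_real (\<bar>\<xi>\<bar> powr a) * exp (- \<i> * complex_of_real (\<delta> * pi * sgn \<xi> / 2))"
  have Re_Z: "c0 * \<bar>\<xi>\<bar> powr a \<le> Re Z"
    using mult_right_mono[OF c0_le_cos[of \<xi>], of "\<bar>\<xi>\<bar> powr a"] by (simp add: Z_def Re_exp mult_ac)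
  hence Re_Z_nonneg: "0 \<le> Re Z"
    using c0_pos by (meson less_imp_le mult_nonneg_nonneg order_trans powr_ge_zero)
  have norm_Z: "norm Z = \<bar>\<xi>\<bar> powr a"
    by (simp add: Z_def norm_mult)
  have integrand: "fourier_integrand v x \<xi> = exp (\<i> * complex_of_real (\<xi> * x)) * exp (- of_real v * Z)" for v
    by (simp add: fourier_integrand_def Z_def algebra_simps flip: exp_add)
  have "norm (exp (- of_real u * Z) - exp (- of_real s * Z)) \<le> 2 * \<bar>u - s\<bar> * norm Z * exp (- min u s * Re Z)"
    using norm_exp_mult_diff_le[OF Re_Z_nonneg, of u s] norm_exp_mult_diff_le[OF Re_Z_nonneg, of s u]
    by (cases "u \<le> s") (simp_all add: norm_minus_commute min_def)
  also have "exp (- min u s * Re Z) \<le> exp (- c0 * min u s * \<bar>\<xi>\<bar> powr a)"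
    using mult_left_mono[OF Re_Z, of "min u s"] assms by (simp add: mult_ac)
  finally have "norm (exp (- of_real u * Z) - exp (- of_real s * Z))
      \<le> 2 * \<bar>u - s\<bar> * norm Z * exp (- c0 * min u s * \<bar>\<xi>\<bar> powr a)"
    by (simp add: mult_left_mono)
  moreover have "fourier_integrand u x \<xi> - fourier_integrand s x \<xi>
      = exp (\<i> * complex_of_real (\<xi> * x)) * (exp (- of_real u * Z) - exp (- of_real s * Z))"
    by (simp add: integrand right_diff_distrib)
  ultimately show ?thesis
    by (simp add: norm_mult norm_Z mult_ac)
qed

lemma abs_stableG_diff_le:
  assumes u: "0 < u" and s: "0 < s"
  shows "\<bar>stableG a \<delta> u x - stableG a \<delta> s x\<bar> \<le> K3 * \<bar>u - s\<bar> * min u s powr (- (a + 1) / a)"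
proof -
  define m where "m = min u s"
  have m: "0 < m"
    using assms by (simp add: m_def)
  have "(\<integral>\<^sup>+\<xi>. ennreal (2 * \<bar>u - s\<bar> * (\<bar>\<xi>\<bar> powr a * exp (- c0 * m * \<bar>\<xi>\<bar> powr a))) \<partial>lborel)
      = ennreal (2 * \<bar>u - s\<bar>) * ennreal (m powr (- (a + 1) / a) * moment a)"
    using nn_integral_powr_mult_exp_eq_moment[OF m, of a] a_gt_1 a_le_2
    by (simp add: ennreal_mult nn_integral_cmult)
  also have "\<dots> = ennreal (2 * \<bar>u - s\<bar> * m powr (- (a + 1) / a) * moment a)"
    by (simp add: ennreal_mult mult_ac moment_def)
  finally have "norm (integral\<^sup>L lborel (\<lambda>\<xi>. fourier_integrand u x \<xi> - fourier_integrand s x \<xi>))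
      \<le> 2 * \<bar>u - s\<bar> * m powr (- (a + 1) / a) * moment a"
    using integrable_fourier_integrand assms norm_fourier_integrand_diff_le[OF assms]
    by (intro norm_integral_le_nn_integral) (auto simp: m_def moment_def)
  moreover have "integral\<^sup>L lborel (\<lambda>\<xi>. fourier_integrand u x \<xi> - fourier_integrand s x \<xi>)
      = integral\<^sup>L lborel (fourier_integrand u x) - integral\<^sup>L lborel (fourier_integrand s x)"
    using integrable_fourier_integrand assms by (intro Bochner_Integration.integral_diff)
  ultimately have "\<bar>Re (integral\<^sup>L lborel (fourier_integrand u x)) - Re (integral\<^sup>L lborel (fourier_integrand s x))\<bar>
      \<le> 2 * \<bar>u - s\<bar> * m powr (- (a + 1) / a) * moment a"
    using abs_Re_le_cmod[of "integral\<^sup>L lborel (fourier_integrand u x) - integral\<^sup>L lborel (fourier_integrand s x)"]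
    by simp
  hence "\<bar>Re (integral\<^sup>L lborel (fourier_integrand u x)) - Re (integral\<^sup>L lborel (fourier_integrand s x))\<bar> / (2 * pi)
      \<le> K3 * \<bar>u - s\<bar> * m powr (- (a + 1) / a)"
    by (simp add: K3_def divide_right_mono field_simps)
  thus ?thesis
    by (simp add: stableG_eq m_def flip: diff_divide_distrib)
qed

definition half_integrand :: "real \<Rightarrow> real \<Rightarrow> complex \<Rightarrow> real \<Rightarrow> complex" where
  "half_integrand u x k \<xi> = exp (\<i> * complex_of_real (\<xi> * x) - complex_of_real (u * \<xi> powr a) * k)"

lemma half_integrand_measurable [measurable]: "half_integrand u x k \<in> borel_measurable borel"
  unfolding half_integrand_def by measurable

lemma norm_half_integrand_le:
  assumes "0 \<le> u" "c0 \<le> Re k" "0 \<le> \<xi>"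
  shows "norm (half_integrand u x k \<xi>) \<le> exp (- c0 * u * \<bar>\<xi>\<bar> powr a)"
proof -
  have "norm (half_integrand u x k \<xi>) = exp (- (u * \<xi> powr a) * Re k)"
    unfolding half_integrand_def norm_exp_eq_Re by simp
  also have "\<dots> \<le> exp (- c0 * u * \<bar>\<xi>\<bar> powr a)"
    using mult_right_mono[OF assms(2), of "u * \<xi> powr a"] assms by (simp add: mult_ac)
  finally show ?thesis .
qed

lemma half_integrand_has_vector_derivative:
  assumes "0 < \<xi>"
  shows "(half_integrand u x k has_vector_derivative
           ((\<i> * complex_of_real x - complex_of_real (u * (a * \<xi> powr (a - 1))) * k) * half_integrand u x k \<xi>)) (at \<xi>)"
proof -
  have "((\<lambda>\<xi>. \<i> * complex_of_real (\<xi> * x) - complex_of_real (u * \<xi> powr a) * k) has_vector_derivative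
      (\<i> * complex_of_real x - complex_of_real (u * (a * \<xi> powr (a - 1))) * k)) (at \<xi>)"
    using assms by (auto intro!: derivative_eq_intros)
  from field_vector_diff_chain_at[OF this DERIV_exp]
  show ?thesis
    unfolding half_integrand_def[abs_def] by (simp add: o_def)
qed

lemma set_integrable_half_integrand:
  assumes "0 < u" "c0 \<le> Re k"
  shows "set_integrable lborel {0<..} (half_integrand u x k)"
  unfolding set_integrable_def
  by (rule Bochner_Integration.integrable_bound[OF integrable_exp[OF assms(1)]])
     (use norm_half_integrand_le[OF _ assms(2)] assms(1) in \<open>auto simp: indicator_def\<close>)

lemma norm_powr_half_integrand_le:
  assumes "0 < u" "c0 \<le> Re k"
  shows "norm (indicator {0<..} \<xi> *\<^sub>R (complex_of_real (\<xi> powr (a - 1)) * half_integrand u x k \<xi>))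
       \<le> \<bar>\<xi>\<bar> powr (a - 1) * exp (- c0 * u * \<bar>\<xi>\<bar> powr a)"
proof (cases "0 < \<xi>")
  case True
  thus ?thesis
    using norm_half_integrand_le[OF _ assms(2), of u \<xi> x] assms(1)
    by (simp add: norm_mult mult_left_mono)
qed (simp add: indicator_def)

lemma set_integrable_powr_half_integrand:
  assumes "0 < u" "c0 \<le> Re k"
  shows "set_integrable lborel {0<..} (\<lambda>\<xi>. complex_of_real (\<xi> powr (a - 1)) * half_integrand u x k \<xi>)"
  unfolding set_integrable_def
  using a_gt_1 a_le_2 norm_powr_half_integrand_le[OF assms]
  by (intro Bochner_Integration.integrable_bound[OF integrable_powr_mult_exp[OF assms(1), of "a - 1"]]) auto

lemma half_integrand_tendsto_at_top:
  assumes "0 < u" "c0 \<le> Re k"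
  shows "(half_integrand u x k \<longlongrightarrow> 0) at_top"
proof (rule Lim_null_comparison)
  show "\<forall>\<^sub>F \<xi> in at_top. norm (half_integrand u x k \<xi>) \<le> exp (- (c0 * u) * \<xi> powr a)"
    using eventually_ge_at_top[of 0]
    by eventually_elim (use norm_half_integrand_le[OF _ assms(2)] assms(1) in simp)
  show "((\<lambda>\<xi>. exp (- (c0 * u) * \<xi> powr a)) \<longlongrightarrow> 0) at_top"
    using c0_pos assms(1) a_gt_1 mult_pos_pos[of c0 u] by real_asymp
qed

lemma half_integrand_tendsto_at_right_0: "(half_integrand u x k \<longlongrightarrow> 1) (at_right 0)"
proof -
  have "((\<lambda>\<xi>::real. \<xi> powr a) \<longlongrightarrow> 0) (at_right 0)"
    using a_gt_1 by (intro tendsto_zero_powrI) (auto simp: eventually_at_filter)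
  hence "(half_integrand u x k \<longlongrightarrow> exp (\<i> * complex_of_real (0 * x) - complex_of_real (u * 0) * k)) (at_right 0)"
    unfolding half_integrand_def by (intro tendsto_intros tendsto_ident_at)
  thus ?thesis
    by simp
qed

lemma half_integrand_derivative_eq:
  "(\<i> * complex_of_real x - complex_of_real (u * (a * \<xi> powr (a - 1))) * k) * half_integrand u x k \<xi>
     = \<i> * complex_of_real x * half_integrand u x k \<xi>
       - complex_of_real (u * a) * k * (complex_of_real (\<xi> powr (a - 1)) * half_integrand u x k \<xi>)"
  by (simp add: algebra_simps)

lemma set_integral_half_integrand_derivative:
  assumes u: "0 < u" and k: "c0 \<le> Re k"
  shows "(LINT \<xi>:{0<..}|lborel. (\<i> * complex_of_real x - complex_of_real (u * (a * \<xi> powr (a - 1))) * k)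
                                * half_integrand u x k \<xi>) = - 1"
proof -
  define D where "D \<xi> = (\<i> * complex_of_real x - complex_of_real (u * (a * \<xi> powr (a - 1))) * k) * half_integrand u x k \<xi>" for \<xi>
  have "set_integrable lborel {0<..} D"
    unfolding D_def half_integrand_derivative_eq
    using set_integrable_half_integrand[OF u k] set_integrable_powr_half_integrand[OF u k]
    by (intro set_integral_diff(1) set_integrable_mult_right) auto
  have "(LBINT \<xi>=0..\<infinity>. D \<xi>) = 0 - 1"
  proof (rule interval_integral_FTC_integrable[where F = "half_integrand u x k"])
    fix \<xi> :: real
    assume "0 < ereal \<xi>" "ereal \<xi> < \<infinity>"
    hence \<xi>: "0 < \<xi>"
      by simp
    show "(half_integrand u x k has_vector_derivative D \<xi>) (at \<xi>)"
      unfolding D_def using \<xi> by (rule half_integrand_has_vector_derivative)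
    show "isCont D \<xi>"
      unfolding D_def half_integrand_def using \<xi> by (intro continuous_intros) auto
  next
    show "set_integrable lborel (einterval 0 \<infinity>) D"
      using \<open>set_integrable lborel {0<..} D\<close> by (simp add: zero_ereal_def)
    show "((half_integrand u x k \<circ> real_of_ereal) \<longlongrightarrow> 1) (at_right 0)"
      using half_integrand_tendsto_at_right_0 by (simp add: zero_ereal_def ereal_tendsto_simps1)
    show "((half_integrand u x k \<circ> real_of_ereal) \<longlongrightarrow> 0) (at_left \<infinity>)"
      using half_integrand_tendsto_at_top[OF u k] by (simp add: ereal_tendsto_simps1)
  qed simp
  thus ?thesis
    by (simp add: D_def interval_lebesgue_integral_0_infty)
qed

lemma half_line_integration_by_parts:
  assumes u: "0 < u" and k: "c0 \<le> Re k"
  shows "\<i> * complex_of_real x * (LINT \<xi>:{0<..}|lborel. half_integrand u x k \<xi>)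
       = - 1 + complex_of_real (u * a) * k * (LINT \<xi>:{0<..}|lborel. complex_of_real (\<xi> powr (a - 1)) * half_integrand u x k \<xi>)"
proof -
  have "- 1 = \<i> * complex_of_real x * (LINT \<xi>:{0<..}|lborel. half_integrand u x k \<xi>)
        - complex_of_real (u * a) * k * (LINT \<xi>:{0<..}|lborel. complex_of_real (\<xi> powr (a - 1)) * half_integrand u x k \<xi>)"
    unfolding set_integral_half_integrand_derivative[OF u k, of x, symmetric] half_integrand_derivative_eq
    using set_integrable_half_integrand[OF u k] set_integrable_powr_half_integrand[OF u k]
    by (subst set_integral_diff(2)) auto
  thus ?thesis
    by (simp add: algebra_simps)
qed

lemma abs_mult_norm_half_integral_le:
  assumes u: "0 < u" and k: "c0 \<le> Re k" "norm k \<le> 1"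
  shows "\<bar>x\<bar> * norm (LINT \<xi>:{0<..}|lborel. half_integrand u x k \<xi>) \<le> 1 + a * moment (a - 1)"
proof -
  have "norm (LINT \<xi>:{0<..}|lborel. complex_of_real (\<xi> powr (a - 1)) * half_integrand u x k \<xi>)
      \<le> u powr (- 1) * moment (a - 1)"
    unfolding set_lebesgue_integral_def
  proof (rule norm_integral_le_nn_integral)
    show "integrable lborel (\<lambda>\<xi>. indicator {0<..} \<xi> *\<^sub>R (complex_of_real (\<xi> powr (a - 1)) * half_integrand u x k \<xi>))"
      using set_integrable_powr_half_integrand[OF u k(1)] by (simp add: set_integrable_def)
    show "(\<integral>\<^sup>+\<xi>. ennreal (\<bar>\<xi>\<bar> powr (a - 1) * exp (- c0 * u * \<bar>\<xi>\<bar> powr a)) \<partial>lborel)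
        = ennreal (u powr (- 1) * moment (a - 1))"
      using nn_integral_powr_mult_exp_eq_moment[OF u, of "a - 1"] a_gt_1 a_le_2 by simp
  qed (use norm_powr_half_integrand_le[OF u k(1)] u in \<open>auto simp: moment_def\<close>)
  hence "norm (complex_of_real (u * a) * k * (LINT \<xi>:{0<..}|lborel. complex_of_real (\<xi> powr (a - 1)) * half_integrand u x k \<xi>))
      \<le> (u * a) * 1 * (u powr (- 1) * moment (a - 1))"
  proof -
    have "norm (complex_of_real (u * a)) = u * a"
      using u a_gt_1 by (simp only: norm_of_real) simp
    thus ?thesis
      unfolding norm_mult using \<open>norm _ \<le> u powr (- 1) * moment (a - 1)\<close> k(2) u a_gt_1
      by (intro mult_mono) auto
  qed
  also have "\<dots> = a * moment (a - 1)"
    using u by (simp add: powr_minus field_simps)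
  finally have "norm (complex_of_real (u * a) * k * (LINT \<xi>:{0<..}|lborel. complex_of_real (\<xi> powr (a - 1)) * half_integrand u x k \<xi>))
      \<le> a * moment (a - 1)" .
  moreover have "\<bar>x\<bar> * norm (LINT \<xi>:{0<..}|lborel. half_integrand u x k \<xi>)
      = norm (- 1 + complex_of_real (u * a) * k *
          (LINT \<xi>:{0<..}|lborel. complex_of_real (\<xi> powr (a - 1)) * half_integrand u x k \<xi>))"
    unfolding half_line_integration_by_parts[OF u k(1), symmetric] by (simp add: norm_mult)
  moreover have "norm (- 1 + w) \<le> 1 + norm w" for w :: complex
    using norm_triangle_ineq[of "- 1" w] by simp
  ultimately show ?thesis
    by (smt (verit, best))
qed

lemma integral_fourier_integrand_eq_half_integrals:
  assumes "0 < u"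
  shows "integral\<^sup>L lborel (fourier_integrand u x)
       = (LINT \<xi>:{0<..}|lborel. half_integrand u x (exp (- \<i> * complex_of_real (\<delta> * pi / 2))) \<xi>)
         + (LINT \<xi>:{0<..}|lborel. half_integrand u (- x) (exp (\<i> * complex_of_real (\<delta> * pi / 2))) \<xi>)"
proof -
  have int: "integrable lborel (fourier_integrand u x)"
    using assms by (rule integrable_fourier_integrand)
  have "integral\<^sup>L lborel (fourier_integrand u x)
      = integral\<^sup>L lborel (\<lambda>\<xi>. indicator {0<..} \<xi> *\<^sub>R fourier_integrand u x \<xi> + indicator {..<0} \<xi> *\<^sub>R fourier_integrand u x \<xi>)"
    by (intro integral_cong_AE) (use AE_lborel_singleton[of 0] in \<open>auto simp: indicator_def elim!: eventually_mono\<close>)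
  also have "\<dots> = (LINT \<xi>:{0<..}|lborel. fourier_integrand u x \<xi>) + (LINT \<xi>:{..<0}|lborel. fourier_integrand u x \<xi>)"
    unfolding set_lebesgue_integral_def using int
    by (intro Bochner_Integration.integral_add integrable_mult_indicator) auto
  also have "(LINT \<xi>:{0<..}|lborel. fourier_integrand u x \<xi>)
      = (LINT \<xi>:{0<..}|lborel. half_integrand u x (exp (- \<i> * complex_of_real (\<delta> * pi / 2))) \<xi>)"
    by (intro set_lebesgue_integral_cong) (auto simp: fourier_integrand_def half_integrand_def)
  also have "(LINT \<xi>:{..<0}|lborel. fourier_integrand u x \<xi>)
      = (LINT \<xi>:{0<..}|lborel. half_integrand u (- x) (exp (\<i> * complex_of_real (\<delta> * pi / 2))) \<xi>)"
  proof -
    have "(LINT \<xi>:{..<0}|lborel. fourier_integrand u x \<xi>)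
        = \<bar>- 1\<bar> *\<^sub>R integral\<^sup>L lborel (\<lambda>\<eta>. indicator {..<0} (0 + - 1 * \<eta>) *\<^sub>R fourier_integrand u x (0 + - 1 * \<eta>))"
      unfolding set_lebesgue_integral_def by (rule lborel_integral_real_affine) simp
    also have "(\<lambda>\<eta>. indicator {..<0} (0 + - 1 * \<eta>) *\<^sub>R fourier_integrand u x (0 + - 1 * \<eta>))
        = (\<lambda>\<eta>. indicator {0<..} \<eta> *\<^sub>R half_integrand u (- x) (exp (\<i> * complex_of_real (\<delta> * pi / 2))) \<eta>)"
      by (rule ext) (auto simp: indicator_def fourier_integrand_def half_integrand_def)
    finally show ?thesis
      by (simp add: set_lebesgue_integral_def)
  qed
  finally show ?thesis .
qed

lemma abs_mult_abs_stableG_le: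
  assumes u: "0 < u"
  shows "\<bar>x\<bar> * \<bar>stableG a \<delta> u x\<bar> \<le> K2"
proof -
  define k where "k = exp (- \<i> * complex_of_real (\<delta> * pi / 2))"
  define k' where "k' = exp (\<i> * complex_of_real (\<delta> * pi / 2))"
  have k: "c0 \<le> Re k" "norm k \<le> 1" and k': "c0 \<le> Re k'" "norm k' \<le> 1"
    unfolding k_def k'_def c0_def by (simp_all add: Re_exp)
  have "\<bar>x\<bar> * norm (integral\<^sup>L lborel (fourier_integrand u x))
      \<le> \<bar>x\<bar> * norm (LINT \<xi>:{0<..}|lborel. half_integrand u x k \<xi>)
        + \<bar>- x\<bar> * norm (LINT \<xi>:{0<..}|lborel. half_integrand u (- x) k' \<xi>)"
    unfolding integral_fourier_integrand_eq_half_integrals[OF u] k_def[symmetric] k'_def[symmetric]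
      abs_minus_cancel distrib_left[symmetric]
    by (intro mult_left_mono norm_triangle_ineq) auto
  also have "\<dots> \<le> 2 * (1 + a * moment (a - 1))"
    unfolding mult_2 by (intro add_mono abs_mult_norm_half_integral_le u k k')
  finally have "\<bar>x\<bar> * \<bar>Re (integral\<^sup>L lborel (fourier_integrand u x))\<bar> \<le> 2 * (1 + a * moment (a - 1))"
    using mult_left_mono[OF abs_Re_le_cmod abs_ge_zero] by (meson order_trans)
  thus ?thesis
    by (simp add: stableG_eq K2_def field_simps)
qed

end

sublocale stable_law \<subseteq> kernel_estimates a K1 K2 K3 "stableG a \<delta>"
proof
  show "0 \<le> K1" "0 \<le> K3"
    by (simp_all add: K1_def K3_def moment_def)
  show "0 < K2"
    using a_gt_1 by (simp add: K2_def moment_def add_pos_nonneg)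
qed (use a_gt_1 abs_stableG_le abs_mult_abs_stableG_le abs_stableG_diff_le in auto)

lemma stableR_eq_poisson_average: "stableR a \<delta> = poisson_average (stableG a \<delta>)"
  by (intro ext) (simp add: stableR_def poisson_average_def)

theorem mainTheorem13:
  fixes a \<delta> :: real
  assumes "1 < a" and "a \<le> 2" and "\<bar>\<delta>\<bar> \<le> 2 - a"
  shows "(\<forall>t>0. ((\<lambda>\<epsilon>. \<integral>\<^sup>+ s\<in>{0..t}. (\<integral>\<^sup>+ x. ennreal ((stableR a \<delta> \<epsilon> s x - stableG a \<delta> s x)\<^sup>2) \<partial>lborel) \<partial>lborel)
              \<longlongrightarrow> 0) (at_right 0))
       \<and> (\<exists>C::real. C \<ge> 0 \<and> (\<forall>\<epsilon>>0. \<forall>t>0.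
              (\<integral>\<^sup>+ x. ennreal ((stableR a \<delta> \<epsilon> t x)\<^sup>2) \<partial>lborel) \<le> ennreal (C * t powr (- 1 / a))))"
proof -
  interpret stable_law a \<delta>
    using assms by unfold_locales
  have "0 \<le> 12 * pi * K1 * K2"
    using K1_nonneg K2_pos by simp
  thus ?thesis
    unfolding stableR_eq_poisson_average
    using tendsto_nn_integral_poisson_average_error nn_integral_poisson_average_sq_le
    by (blast intro: less_imp_le)
qed

end
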